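(* Let $A$ and $B$ be finite-dimensional quantum systems with Hilbert spaces $\mathcal H_A$, $\mathcal H_B$, let $\mathcal A$ be a quantum channel on $A$, $\mathcal B$ a quantum channel on $B$, and $\mathcal S$ a quantum channel on the direct-sum system $A\oplus B$ (Hilbert space $\mathcal H_A\oplus\mathcal H_B$). The following are equivalent: 1. $\mathcal S$ is a superposition of $\mathcal A$ and $\mathcal B$, i.e. (i) $\mathcal S$ satisfies the No Leakage Condition with respect to both sectors $A$ and $B$, and (ii) the restriction of $\mathcal S$ to sector $A$ is $\mathcal A$ and the restriction of $\mathcal S$ to sector $B$ is $\mathcal B$. 2. $\mathcal S$ has a Kraus representation $\{S_i\}_{i=1}^r$ with $S_i=A_i\oplus B_i$ for all $i$, where $\{A_i\}_{i=1}^r$ is some Kraus representation of $\mathcal A$ and $\{B_i\}_{i=1}^r$ is some Kraus representation of $\mathcal B$. 3. There exist a quantum system $E$ (the environment) with Hilbert space $\mathcal H_E$, a pure state $|\eta\rangle\in\mathcal H_E$, two Hamiltonians $H_{AE}$ and $H_{BE}$ with supports in the orthogonal subspaces $\mathcal H_A\otimes\mathcal H_E$ and $\mathcal H_B\otimes\mathcal H_E$ respectively, and a time $T$, such that, writing $\eta=|\eta\rangle\langle\eta|$: $\mathcal A(\rho)=\operatorname{Tr}_E[U_{AE}(\rho\otimes\eta)U_{AE}^\dagger]$ with $U_{AE}=\exp[-iH_{AE}T/\hbar]$; $\mathcal B(\rho)=\operatorname{Tr}_E[U_{BE}(\rho\otimes\eta)U_{BE}^\dagger]$ with $U_{BE}=\exp[-iH_{BE}T/\hbar]$;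 and $\mathcal S(\rho)=\operatorname{Tr}_E[U(\rho\otimes\eta)U^\dagger]$ with $U=\exp[-i(H_{AE}\oplus H_{BE})T/\hbar]$.
   Context: A quantum channel from system $X$ to system $Y$ is a linear completely positive trace-preserving map from density operators on $\mathcal H_X$ to density operators on $\mathcal H_Y$; it has Kraus representations $\mathcal C(\rho)=\sum_i C_i\rho C_i^\dagger$ with $\sum_i C_i^\dagger C_i=I$ (Kraus representations are non-unique and may contain zero operators). A sector of a system $S$ is a subspace $\mathcal H_A\subseteq\mathcal H_S$ with projector $P_A$; its states are density operators $\rho$ on $\mathcal H_S$ with $\operatorname{Tr}[\rho P_A]=1$. A channel $\widetilde{\mathcal C}$ on $S$ satisfies the No Leakage Condition with respect to sector $A$ if $\operatorname{Tr}[P_A\widetilde{\mathcal C}(\rho)]=1$ for every state $\rho$ of sector $A$. When this holds, for any Kraus representation $\{\widetilde C_i\}$ of $\widetilde{\mathcal C}$ the operators $C_i:=P_A\widetilde C_iP_A$ (viewed as operators on $\mathcal H_A$) are Kraus operators of a channel $\mathcal C$ on $A$, called the restriction of $\widetilde{\mathcal C}$ to sector $A$. In $A\oplus B$, $A$ and $B$ are orthogonal sectors. *)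

theory Defs
  imports Complex_Main "Jordan_Normal_Form.Matrix"
begin

(* Operators on finite-dimensional Hilbert spaces C^n are complex matrices;
   the Hilbert space of a system is identified with C^n, n = its dimension. *)

definition dag :: "complex mat \<Rightarrow> complex mat" where
  "dag M = mat (dim_col M) (dim_row M) (\<lambda>(i,j). cnj (M $$ (j,i)))"

definition mtrace :: "complex mat \<Rightarrow> complex" where
  "mtrace M = (\<Sum>i<dim_row M. M $$ (i,i))"

definition msum :: "nat \<Rightarrow> nat \<Rightarrow> complex mat list \<Rightarrow> complex mat" where
  "msum n m Ms = foldr (+) Ms (0\<^sub>m n m)"

definition hermitian :: "nat \<Rightarrow> complex mat \<Rightarrow> bool" where
  "hermitian n M \<longleftrightarrow> M \<in> carrier_mat n n \<and> dag M = M"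

definition density :: "nat \<Rightarrow> complex mat \<Rightarrow> bool" where
  "density n \<rho> \<longleftrightarrow> hermitian n \<rho> \<and>
     (\<forall>v \<in> carrier_vec n. 0 \<le> Re (\<Sum>i<n. cnj (v $ i) * (\<rho> *\<^sub>v v) $ i)) \<and>
     mtrace \<rho> = 1"

definition is_kraus_rep :: "nat \<Rightarrow> nat \<Rightarrow> (complex mat \<Rightarrow> complex mat) \<Rightarrow> complex mat list \<Rightarrow> bool" where
  "is_kraus_rep n m \<Phi> Ks \<longleftrightarrow>
     (\<forall>K \<in> set Ks. K \<in> carrier_mat m n) \<and>
     msum n n (map (\<lambda>K. dag K * K) Ks) = 1\<^sub>m n \<and>
     (\<forall>\<rho>. density n \<rho> \<longrightarrow> \<Phi> \<rho> = msum m m (map (\<lambda>K. K * \<rho> * dag K) Ks))"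

(* quantum channel from C^n to C^m (a CPTP map, given through its action on density operators) *)
definition is_channel :: "nat \<Rightarrow> nat \<Rightarrow> (complex mat \<Rightarrow> complex mat) \<Rightarrow> bool" where
  "is_channel n m \<Phi> \<longleftrightarrow> (\<exists>Ks. is_kraus_rep n m \<Phi> Ks)"

definition dsum :: "complex mat \<Rightarrow> complex mat \<Rightarrow> complex mat" where
  "dsum A B = four_block_mat A (0\<^sub>m (dim_row A) (dim_col B)) (0\<^sub>m (dim_row B) (dim_col A)) B"

definition projA :: "nat \<Rightarrow> nat \<Rightarrow> complex mat" where
  "projA a b = dsum (1\<^sub>m a) (0\<^sub>m b b)"

definition projB :: "nat \<Rightarrow> nat \<Rightarrow> complex mat" where
  "projB a b = dsum (0\<^sub>m a a) (1\<^sub>m b)"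

definition no_leakage :: "nat \<Rightarrow> complex mat \<Rightarrow> (complex mat \<Rightarrow> complex mat) \<Rightarrow> bool" where
  "no_leakage n P S \<longleftrightarrow>
     (\<forall>\<rho>. density n \<rho> \<and> mtrace (\<rho> * P) = 1 \<longrightarrow> mtrace (P * S \<rho>) = 1)"

(* P_A K P_A and P_B K P_B, viewed as operators on H_A = C^a, resp. H_B = C^b *)
definition blockA :: "nat \<Rightarrow> complex mat \<Rightarrow> complex mat" where
  "blockA a K = mat a a (\<lambda>(i,j). K $$ (i,j))"

definition blockB :: "nat \<Rightarrow> nat \<Rightarrow> complex mat \<Rightarrow> complex mat" where
  "blockB a b K = mat b b (\<lambda>(i,j). K $$ (a+i, a+j))"

definition restriction_A_is :: "nat \<Rightarrow> nat \<Rightarrow> (complex mat \<Rightarrow> complex mat) \<Rightarrow> (complex mat \<Rightarrow> complex mat) \<Rightarrow> bool" where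
  "restriction_A_is a b S CA \<longleftrightarrow>
     (\<forall>Ks. is_kraus_rep (a+b) (a+b) S Ks \<longrightarrow> is_kraus_rep a a CA (map (blockA a) Ks))"

definition restriction_B_is :: "nat \<Rightarrow> nat \<Rightarrow> (complex mat \<Rightarrow> complex mat) \<Rightarrow> (complex mat \<Rightarrow> complex mat) \<Rightarrow> bool" where
  "restriction_B_is a b S CB \<longleftrightarrow>
     (\<forall>Ks. is_kraus_rep (a+b) (a+b) S Ks \<longrightarrow> is_kraus_rep b b CB (map (blockB a b) Ks))"

definition superposition_of :: "nat \<Rightarrow> nat \<Rightarrow> (complex mat \<Rightarrow> complex mat) \<Rightarrow> (complex mat \<Rightarrow> complex mat) \<Rightarrow> (complex mat \<Rightarrow> complex mat) \<Rightarrow> bool" where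
  "superposition_of a b S CA CB \<longleftrightarrow>
     no_leakage (a+b) (projA a b) S \<and> no_leakage (a+b) (projB a b) S \<and>
     restriction_A_is a b S CA \<and> restriction_B_is a b S CB"

(* Kronecker (tensor) product; basis index of |i> \<otimes> |k> is i * dim + k *)
definition kron :: "complex mat \<Rightarrow> complex mat \<Rightarrow> complex mat" where
  "kron A B = mat (dim_row A * dim_row B) (dim_col A * dim_col B)
     (\<lambda>(i,j). A $$ (i div dim_row B, j div dim_col B) * B $$ (i mod dim_row B, j mod dim_col B))"

definition ptrace_E :: "nat \<Rightarrow> nat \<Rightarrow> complex mat \<Rightarrow> complex mat" where
  "ptrace_E s e M = mat s s (\<lambda>(i,j). \<Sum>k<e. M $$ (i*e+k, j*e+k))"

definition mexp :: "complex mat \<Rightarrow> complex mat" where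
  "mexp M = mat (dim_row M) (dim_row M) (\<lambda>(i,j). \<Sum>k. (M ^\<^sub>m k) $$ (i,j) / of_nat (fact k))"

definition unit_vec :: "nat \<Rightarrow> complex vec \<Rightarrow> bool" where
  "unit_vec e v \<longleftrightarrow> v \<in> carrier_vec e \<and> (\<Sum>i<e. (cmod (v $ i))\<^sup>2) = 1"

definition ket_bra :: "complex vec \<Rightarrow> complex mat" where
  "ket_bra v = mat (dim_vec v) (dim_vec v) (\<lambda>(i,j). v $ i * cnj (v $ j))"

definition hamiltonian_dilation :: "real \<Rightarrow> nat \<Rightarrow> nat \<Rightarrow> complex vec \<Rightarrow> complex mat \<Rightarrow> real \<Rightarrow> (complex mat \<Rightarrow> complex mat) \<Rightarrow> bool" where
  "hamiltonian_dilation hbar s e eta H T \<Phi> \<longleftrightarrow>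
     (let U = mexp ((- \<i> * of_real T / of_real hbar) \<cdot>\<^sub>m H) in
      \<forall>\<rho>. density s \<rho> \<longrightarrow> \<Phi> \<rho> = ptrace_E s e (U * kron \<rho> (ket_bra eta) * dag U))"

end

theory Submission
  imports Defs
begin

(* Feeding S the basis state |j><j| gives
   the diagonal entries sum_i |(S_i)_mj|^2, so no leakage out of a sector (or, equally, S acting on each
   sector as a channel of that sector) forces every S_i to be block diagonal, S_i = A_i + B_i; the blocks
   are then Kraus representations of the restrictions.  Conversely, for block diagonal S_i the identity
   sum_i S_i^dagger P_A S_i = P_A gives no leakage.

   A channel with Kraus operators K_1, ..., K_r on C^n is dilated on C^n (x) C^(r+1) with environment
   state |0>: J = sum_k K_k (x) |k><0| maps the ground subspace isometrically, W = P - J satisfies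
   W^dagger W = 2P, so Q = W W^dagger is twice a projection, the Hamiltonian (pi/2) Q generates at time
   T = hbar the unitary 1 - Q, which maps rho (x) |0><0| to J (rho (x) |0><0|) J^dagger, and tracing out
   the environment gives sum_k K_k rho K_k^dagger.  Every step commutes with direct sums, so Kraus
   operators A_i + B_i give the Hamiltonian H_AE + H_BE, and conversely a dilation by H_AE + H_BE makes
   S act on each sector as A resp. B. *)

lemma index_mult_mat_sum [simp]:
  "i < dim_row A \<Longrightarrow> j < dim_col B \<Longrightarrow> dim_col A = dim_row B \<Longrightarrow>
   (A * B) $$ (i,j) = (\<Sum>l<dim_col A. A $$ (i,l) * B $$ (l,j))"
  by (auto simp: scalar_prod_def lessThan_atLeast0 intro!: sum.cong)

lemma index_mult_mat_vec_sum [simp]: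
  "i < dim_row A \<Longrightarrow> dim_vec v = dim_col A \<Longrightarrow> (A *\<^sub>v v) $ i = (\<Sum>l<dim_vec v. A $$ (i,l) * v $ l)"
  by (auto simp: scalar_prod_def lessThan_atLeast0 intro!: sum.cong)

declare index_mult_mat[simp del] index_mult_mat_vec[simp del]

lemma dim_mult_mat [simp]: "dim_row (A * B) = dim_row A" "dim_col (A * B) = dim_col B"
  by (simp_all add: index_mult_mat)

lemma sum_lessThan_add: "(\<Sum>i<a + (b::nat). f i) = (\<Sum>i<a. f i) + (\<Sum>i<b. f (a + i))"
  by (induction b) (auto simp: add.assoc)

lemma sum_lessThan_mult: "(\<Sum>l<(n::nat) * e. f l) = (\<Sum>i<n. \<Sum>k<e. f (i * e + k))"
proof (induction n)
  case (Suc n)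
  have "(\<Sum>l<Suc n * e. f l) = (\<Sum>l<n * e + e. f l)" by (simp add: add.commute)
  also have "\<dots> = (\<Sum>l<n * e. f l) + (\<Sum>k<e. f (n * e + k))" by (rule sum_lessThan_add)
  finally show ?case using Suc by simp
qed simp

lemma dag_carrier [simp]: "M \<in> carrier_mat n m \<Longrightarrow> dag M \<in> carrier_mat m n"
  unfolding dag_def by auto

lemma dim_dag [simp]: "dim_row (dag M) = dim_col M" "dim_col (dag M) = dim_row M"
  unfolding dag_def by auto

lemma index_dag [simp]: "i < dim_col M \<Longrightarrow> j < dim_row M \<Longrightarrow> dag M $$ (i,j) = cnj (M $$ (j,i))"
  unfolding dag_def by auto

lemma sandwich_carrier [simp]: "K \<in> carrier_mat n n \<Longrightarrow> \<rho> \<in> carrier_mat n n \<Longrightarrow> K * \<rho> * dag K \<in> carrier_mat n n"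
  by auto

lemma dag_sandwich_carrier [simp]: "K \<in> carrier_mat n n \<Longrightarrow> P \<in> carrier_mat n n \<Longrightarrow> dag K * P * K \<in> carrier_mat n n"
  by auto

lemma dag_mult_self_carrier [simp]: "K \<in> carrier_mat n n \<Longrightarrow> dag K * K \<in> carrier_mat n n"
  by auto

lemma dag_dag [simp]: "dag (dag M) = M"
  by (rule eq_matI) auto

lemma dag_one [simp]: "dag (1\<^sub>m n) = 1\<^sub>m n"
  by (rule eq_matI) auto

lemma dag_zero [simp]: "dag (0\<^sub>m n m) = 0\<^sub>m m n"
  by (rule eq_matI) auto

lemma dag_smult: "dag (c \<cdot>\<^sub>m A) = cnj c \<cdot>\<^sub>m dag A"
  by (rule eq_matI) auto

lemma dag_minus: "A \<in> carrier_mat n m \<Longrightarrow> B \<in> carrier_mat n m \<Longrightarrow> dag (A - B) = dag A - dag B"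
  by (rule eq_matI) auto

lemma dag_mult:
  assumes "A \<in> carrier_mat n m" "B \<in> carrier_mat m k"
  shows "dag (A * B) = dag B * dag A"
  by (rule eq_matI) (use assms in \<open>auto simp: mult.commute\<close>)

lemma msum_Nil [simp]: "msum n m [] = 0\<^sub>m n m"
  unfolding msum_def by simp

lemma msum_Cons [simp]: "msum n m (M # Ms) = M + msum n m Ms"
  unfolding msum_def by simp

lemma msum_carrier: "(\<And>M. M \<in> set Ms \<Longrightarrow> M \<in> carrier_mat n m) \<Longrightarrow> msum n m Ms \<in> carrier_mat n m"
  by (induction Ms) auto

lemma msum_map_carrier:
  "(\<And>x. x \<in> set xs \<Longrightarrow> f x \<in> carrier_mat n m) \<Longrightarrow> msum n m (map f xs) \<in> carrier_mat n m"
  by (rule msum_carrier) auto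

lemma index_msum_map:
  assumes "\<And>x. x \<in> set xs \<Longrightarrow> f x \<in> carrier_mat n m" "i < n" "j < m"
  shows "msum n m (map f xs) $$ (i,j) = (\<Sum>x\<leftarrow>xs. f x $$ (i,j))"
  using assms(1)
proof (induction xs)
  case (Cons x xs)
  then have "msum n m (map f xs) \<in> carrier_mat n m" by (intro msum_map_carrier) auto
  with Cons assms(2,3) show ?case by auto
qed (use assms in auto)

lemma msum_map_cong:
  "(\<And>x. x \<in> set xs \<Longrightarrow> f x = g x) \<Longrightarrow> msum n m (map f xs) = msum n m (map g xs)"
  by (metis map_cong)

lemma msum_dag_sandwich_one:
  "(\<And>K. K \<in> set Ks \<Longrightarrow> K \<in> carrier_mat m n) \<Longrightarrow>
   msum n n (map (\<lambda>K. dag K * 1\<^sub>m m * K) Ks) = msum n n (map (\<lambda>K. dag K * K) Ks)"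
  by (intro msum_map_cong) (metis dag_carrier right_mult_one_mat)

lemma msum_map_zero: "msum n m (map (\<lambda>x. 0\<^sub>m n m) xs) = 0\<^sub>m n m"
  by (induction xs) auto

lemma mtrace_zero [simp]: "mtrace (0\<^sub>m n n) = 0"
  by (simp add: mtrace_def)

lemma mtrace_add: "A \<in> carrier_mat n n \<Longrightarrow> B \<in> carrier_mat n n \<Longrightarrow> mtrace (A + B) = mtrace A + mtrace B"
  by (simp add: mtrace_def sum.distrib)

lemma mtrace_mult_comm:
  assumes "A \<in> carrier_mat n m" "B \<in> carrier_mat m n"
  shows "mtrace (A * B) = mtrace (B * A)"
proof -
  have "mtrace (A * B) = (\<Sum>i<n. \<Sum>l<m. A $$ (i,l) * B $$ (l,i))"
    using assms by (simp add: mtrace_def)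
  also have "\<dots> = (\<Sum>l<m. \<Sum>i<n. B $$ (l,i) * A $$ (i,l))"
    by (subst sum.swap) (simp add: mult.commute)
  also have "\<dots> = mtrace (B * A)"
    using assms by (simp add: mtrace_def)
  finally show ?thesis .
qed

lemma mtrace_mult_msum_sandwich:
  assumes P: "P \<in> carrier_mat n n" and \<rho>: "\<rho> \<in> carrier_mat n n"
    and Ks: "\<And>K. K \<in> set Ks \<Longrightarrow> K \<in> carrier_mat n n"
  shows "mtrace (P * msum n n (map (\<lambda>K. K * \<rho> * dag K) Ks)) =
         mtrace (msum n n (map (\<lambda>K. dag K * P * K) Ks) * \<rho>)"
  using Ks
proof (induction Ks)
  case Nil
  then show ?case using P \<rho> by (simp add: mtrace_def)
next
  case (Cons K Ks)
  have K: "K \<in> carrier_mat n n" and Ks: "\<And>K. K \<in> set Ks \<Longrightarrow> K \<in> carrier_mat n n"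
    using Cons.prems by auto
  have S1: "msum n n (map (\<lambda>K. K * \<rho> * dag K) Ks) \<in> carrier_mat n n"
    using Ks \<rho> by (intro msum_map_carrier) auto
  have S2: "msum n n (map (\<lambda>K. dag K * P * K) Ks) \<in> carrier_mat n n"
    using Ks P by (intro msum_map_carrier) auto
  have "mtrace (P * (K * \<rho> * dag K)) = mtrace ((P * K * \<rho>) * dag K)"
    using P K \<rho> by (simp add: assoc_mult_mat[of _ n n _ n _ n])
  also have "\<dots> = mtrace (dag K * (P * K * \<rho>))"
    using P K \<rho> by (simp add: mtrace_mult_comm[of _ n n])
  also have "\<dots> = mtrace ((dag K * P * K) * \<rho>)"
    using P K \<rho> by (simp add: assoc_mult_mat[of _ n n _ n _ n])
  finally have head: "mtrace (P * (K * \<rho> * dag K)) = mtrace ((dag K * P * K) * \<rho>)" .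
  have "mtrace (P * msum n n (map (\<lambda>K. K * \<rho> * dag K) (K # Ks)))
      = mtrace (P * (K * \<rho> * dag K)) + mtrace (P * msum n n (map (\<lambda>K. K * \<rho> * dag K) Ks))"
    using P K \<rho> S1 by (simp add: mult_add_distrib_mat[OF P _ S1] mtrace_add[of _ n])
  also have "\<dots> = mtrace ((dag K * P * K) * \<rho>) + mtrace (msum n n (map (\<lambda>K. dag K * P * K) Ks) * \<rho>)"
    using head Cons.IH[OF Ks] by simp
  also have "\<dots> = mtrace (msum n n (map (\<lambda>K. dag K * P * K) (K # Ks)) * \<rho>)"
  proof -
    have "dag K * P * K * \<rho> \<in> carrier_mat n n" "msum n n (map (\<lambda>K. dag K * P * K) Ks) * \<rho> \<in> carrier_mat n n"
      using P K \<rho> S2 by auto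
    then show ?thesis
      using P K \<rho> S2 by (simp add: add_mult_distrib_mat[OF _ S2 \<rho>] mtrace_add)
  qed
  finally show ?case .
qed

lemma density_carrier: "density n \<rho> \<Longrightarrow> \<rho> \<in> carrier_mat n n"
  unfolding density_def hermitian_def by auto

lemma kraus_rep_carrier: "is_kraus_rep n m \<Phi> Ks \<Longrightarrow> K \<in> set Ks \<Longrightarrow> K \<in> carrier_mat m n"
  unfolding is_kraus_rep_def by auto

lemma kraus_rep_apply:
  "is_kraus_rep n m \<Phi> Ks \<Longrightarrow> density n \<rho> \<Longrightarrow> \<Phi> \<rho> = msum m m (map (\<lambda>K. K * \<rho> * dag K) Ks)"
  unfolding is_kraus_rep_def by auto

lemma kraus_rep_completeness:
  "is_kraus_rep n m \<Phi> Ks \<Longrightarrow> msum n n (map (\<lambda>K. dag K * K) Ks) = 1\<^sub>m n"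
  unfolding is_kraus_rep_def by auto

lemma kraus_rep_image_carrier: "is_kraus_rep n m \<Phi> Ks \<Longrightarrow> density n \<rho> \<Longrightarrow> \<Phi> \<rho> \<in> carrier_mat m m"
  unfolding is_kraus_rep_def density_def hermitian_def
  by (auto intro!: msum_map_carrier mult_carrier_mat dag_carrier)

lemma channel_image_carrier: "is_channel n m \<Phi> \<Longrightarrow> density n \<rho> \<Longrightarrow> \<Phi> \<rho> \<in> carrier_mat m m"
  unfolding is_channel_def using kraus_rep_image_carrier by blast

lemma kraus_rep_mtrace:
  assumes K: "is_kraus_rep n n \<Phi> Ks" and \<rho>: "density n \<rho>"
  shows "mtrace (\<Phi> \<rho>) = 1"
proof -
  have Ks: "\<And>K. K \<in> set Ks \<Longrightarrow> K \<in> carrier_mat n n" using K by (rule kraus_rep_carrier)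
  have r: "\<rho> \<in> carrier_mat n n" "mtrace \<rho> = 1"
    using \<rho> unfolding density_def hermitian_def by auto
  have "mtrace (1\<^sub>m n * \<Phi> \<rho>) = mtrace \<rho>"
    using mtrace_mult_msum_sandwich[of "1\<^sub>m n" n \<rho> Ks] Ks r msum_dag_sandwich_one[OF Ks]
    by (simp add: kraus_rep_apply[OF K \<rho>] kraus_rep_completeness[OF K])
  then show ?thesis using kraus_rep_image_carrier[OF K \<rho>] r by simp
qed

section \<open>Direct sums and states of a sector\<close>

lemma dsum_carrier [simp]:
  "A \<in> carrier_mat n1 m1 \<Longrightarrow> B \<in> carrier_mat n2 m2 \<Longrightarrow> dsum A B \<in> carrier_mat (n1 + n2) (m1 + m2)"
  unfolding dsum_def by auto

lemma dim_dsum [simp]: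
  "dim_row (dsum A B) = dim_row A + dim_row B" "dim_col (dsum A B) = dim_col A + dim_col B"
  unfolding dsum_def by auto

lemma index_dsum:
  assumes "A \<in> carrier_mat n1 m1" "B \<in> carrier_mat n2 m2" "i < n1 + n2" "j < m1 + m2"
  shows "dsum A B $$ (i,j) =
    (if i < n1 then if j < m1 then A $$ (i,j) else 0
     else if j < m1 then 0 else B $$ (i - n1, j - m1))"
  using assms unfolding dsum_def by auto

lemma dsum_mult:
  assumes "A1 \<in> carrier_mat n1 k1" "A2 \<in> carrier_mat k1 m1" "B1 \<in> carrier_mat n2 k2" "B2 \<in> carrier_mat k2 m2"
  shows "dsum A1 B1 * dsum A2 B2 = dsum (A1 * A2) (B1 * B2)"
  using assms unfolding dsum_def
  by (subst mult_four_block_mat[of A1 n1 k1 _ k2 _ n2 _ A2 m1 _ m2])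
     (auto simp del: dim_mult_mat simp: index_mult_mat)

lemma dag_dsum: "dag (dsum A B) = dsum (dag A) (dag B)"
  by (rule eq_matI) (auto simp: dsum_def)

lemma dsum_minus:
  assumes "A1 \<in> carrier_mat n1 m1" "A2 \<in> carrier_mat n1 m1" "B1 \<in> carrier_mat n2 m2" "B2 \<in> carrier_mat n2 m2"
  shows "dsum A1 B1 - dsum A2 B2 = dsum (A1 - A2) (B1 - B2)"
  by (rule eq_matI) (use assms in \<open>auto simp: dsum_def\<close>)

lemma dsum_add:
  assumes "A1 \<in> carrier_mat n1 m1" "A2 \<in> carrier_mat n1 m1" "B1 \<in> carrier_mat n2 m2" "B2 \<in> carrier_mat n2 m2"
  shows "dsum A1 B1 + dsum A2 B2 = dsum (A1 + A2) (B1 + B2)"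
  by (rule eq_matI) (use assms in \<open>auto simp: dsum_def\<close>)

lemma dsum_smult: "c \<cdot>\<^sub>m dsum A B = dsum (c \<cdot>\<^sub>m A) (c \<cdot>\<^sub>m B)"
  by (rule eq_matI) (auto simp: dsum_def)

lemma dsum_zero: "dsum (0\<^sub>m n1 m1) (0\<^sub>m n2 m2) = 0\<^sub>m (n1 + n2) (m1 + m2)"
  by (rule eq_matI) (auto simp: dsum_def)

lemma dsum_one: "dsum (1\<^sub>m n1) (1\<^sub>m n2) = 1\<^sub>m (n1 + n2)"
  by (rule eq_matI) (auto simp: dsum_def)

lemma blockA_carrier [simp]: "blockA a K \<in> carrier_mat a a"
  unfolding blockA_def by auto

lemma blockB_carrier [simp]: "blockB a b K \<in> carrier_mat b b"
  unfolding blockB_def by auto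

lemma dim_blockA [simp]: "dim_row (blockA a K) = a" "dim_col (blockA a K) = a"
  unfolding blockA_def by auto

lemma dim_blockB [simp]: "dim_row (blockB a b K) = b" "dim_col (blockB a b K) = b"
  unfolding blockB_def by auto

lemma blockA_dsum [simp]: "A \<in> carrier_mat a a \<Longrightarrow> blockA a (dsum A B) = A"
  by (rule eq_matI) (auto simp: blockA_def dsum_def)

lemma blockB_dsum [simp]: "A \<in> carrier_mat a a \<Longrightarrow> B \<in> carrier_mat b b \<Longrightarrow> blockB a b (dsum A B) = B"
  by (rule eq_matI) (auto simp: blockB_def dsum_def)

lemma sandwich_dsum:
  assumes "A \<in> carrier_mat a a" "B \<in> carrier_mat b b" "X \<in> carrier_mat a a" "Y \<in> carrier_mat b b"
  shows "dsum A B * dsum X Y * dag (dsum A B) = dsum (A * X * dag A) (B * Y * dag B)"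
  using assms by (simp add: dag_dsum dsum_mult[of _ a a _ a _ b b _ b])

lemma dag_sandwich_dsum:
  assumes "A \<in> carrier_mat a a" "B \<in> carrier_mat b b" "X \<in> carrier_mat a a" "Y \<in> carrier_mat b b"
  shows "dag (dsum A B) * dsum X Y * dsum A B = dsum (dag A * X * A) (dag B * Y * B)"
proof -
  have "dag A * X \<in> carrier_mat a a" "dag B * Y \<in> carrier_mat b b" using assms by auto
  then show ?thesis using assms by (simp add: dag_dsum dsum_mult[of _ a a _ a _ b b _ b])
qed

lemma msum_map2_dsum:
  assumes "length As = length Bs"
    and "\<And>A. A \<in> set As \<Longrightarrow> f A \<in> carrier_mat a a" and "\<And>B. B \<in> set Bs \<Longrightarrow> g B \<in> carrier_mat b b"
  shows "msum (a + b) (a + b) (map2 (\<lambda>A B. dsum (f A) (g B)) As Bs) =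
         dsum (msum a a (map f As)) (msum b b (map g Bs))"
  using assms
proof (induction As Bs rule: list_induct2)
  case Nil
  then show ?case by (simp add: dsum_zero)
next
  case (Cons A As B Bs)
  then show ?case
    by (simp, subst dsum_add[of _ a a _ _ b b]) (auto intro: msum_map_carrier)
qed

context
  fixes As Bs :: "complex mat list" and a b :: nat
  assumes len: "length As = length Bs"
    and As: "\<And>A. A \<in> set As \<Longrightarrow> A \<in> carrier_mat a a"
    and Bs: "\<And>B. B \<in> set Bs \<Longrightarrow> B \<in> carrier_mat b b"
begin

lemma msum_sandwich_map2_dsum:
  assumes "X \<in> carrier_mat a a" "Y \<in> carrier_mat b b"
  shows "msum (a + b) (a + b) (map (\<lambda>K. K * dsum X Y * dag K) (map2 dsum As Bs)) =
         dsum (msum a a (map (\<lambda>A. A * X * dag A) As)) (msum b b (map (\<lambda>B. B * Y * dag B) Bs))"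
proof -
  have eq: "map (\<lambda>K. K * dsum X Y * dag K) (map2 dsum As Bs) =
        map2 (\<lambda>A B. dsum (A * X * dag A) (B * Y * dag B)) As Bs"
    by (auto intro!: sandwich_dsum assms dest: set_zip_leftD set_zip_rightD As Bs)
  show ?thesis unfolding eq by (rule msum_map2_dsum[OF len]) (use assms As Bs in auto)
qed

lemma msum_dag_mult_self_map2_dsum:
  "msum (a + b) (a + b) (map (\<lambda>K. dag K * K) (map2 dsum As Bs)) =
   dsum (msum a a (map (\<lambda>A. dag A * A) As)) (msum b b (map (\<lambda>B. dag B * B) Bs))"
proof -
  have eq: "map (\<lambda>K. dag K * K) (map2 dsum As Bs) = map2 (\<lambda>A B. dsum (dag A * A) (dag B * B)) As Bs"
  proof -
    have blockwise: "dag (dsum A B) * dsum A B = dsum (dag A * A) (dag B * B)"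
      if "A \<in> carrier_mat a a" "B \<in> carrier_mat b b" for A B
      using that by (simp add: dag_dsum dsum_mult[of _ a a _ a _ b b _ b])
    show ?thesis by (auto intro!: blockwise dest: set_zip_leftD set_zip_rightD As Bs)
  qed
  show ?thesis unfolding eq by (rule msum_map2_dsum[OF len]) (use As Bs in auto)
qed

lemma msum_dag_sandwich_map2_dsum:
  assumes "X \<in> carrier_mat a a" "Y \<in> carrier_mat b b"
  shows "msum (a + b) (a + b) (map (\<lambda>K. dag K * dsum X Y * K) (map2 dsum As Bs)) =
         dsum (msum a a (map (\<lambda>A. dag A * X * A) As)) (msum b b (map (\<lambda>B. dag B * Y * B) Bs))"
proof -
  have eq: "map (\<lambda>K. dag K * dsum X Y * K) (map2 dsum As Bs) =
        map2 (\<lambda>A B. dsum (dag A * X * A) (dag B * Y * B)) As Bs"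
    by (auto intro!: dag_sandwich_dsum assms dest: set_zip_leftD set_zip_rightD As Bs)
  show ?thesis unfolding eq by (rule msum_map2_dsum[OF len]) (use assms As Bs in auto)
qed

end

definition psd :: "nat \<Rightarrow> complex mat \<Rightarrow> bool" where
  "psd n M \<longleftrightarrow> (\<forall>v \<in> carrier_vec n. 0 \<le> Re (\<Sum>i<n. cnj (v $ i) * (M *\<^sub>v v) $ i))"

lemma density_iff: "density n \<rho> \<longleftrightarrow> hermitian n \<rho> \<and> psd n \<rho> \<and> mtrace \<rho> = 1"
  unfolding density_def psd_def by simp

lemma psd_zero: "psd n (0\<^sub>m n n)"
  unfolding psd_def by simp

lemma psd_dsum:
  assumes X: "X \<in> carrier_mat a a" "psd a X" and Y: "Y \<in> carrier_mat b b" "psd b Y"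
  shows "psd (a + b) (dsum X Y)"
  unfolding psd_def
proof
  fix v :: "complex vec" assume v: "v \<in> carrier_vec (a + b)"
  define v1 where "v1 = vec a (\<lambda>i. v $ i)"
  define v2 where "v2 = vec b (\<lambda>i. v $ (a + i))"
  have v12: "v1 \<in> carrier_vec a" "v2 \<in> carrier_vec b" unfolding v1_def v2_def by auto
  have top: "(dsum X Y *\<^sub>v v) $ i = (X *\<^sub>v v1) $ i" if "i < a" for i
    using X Y v that by (simp add: sum_lessThan_add index_dsum[of _ a a _ b b] v1_def)
  have bottom: "(dsum X Y *\<^sub>v v) $ (a + i) = (Y *\<^sub>v v2) $ i" if "i < b" for i
    using X Y v that by (simp add: sum_lessThan_add index_dsum[of _ a a _ b b] v2_def)
  have "(\<Sum>i<a + b. cnj (v $ i) * (dsum X Y *\<^sub>v v) $ i) =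
        (\<Sum>i<a. cnj (v1 $ i) * (X *\<^sub>v v1) $ i) + (\<Sum>i<b. cnj (v2 $ i) * (Y *\<^sub>v v2) $ i)"
    by (simp add: sum_lessThan_add top bottom v1_def v2_def)
  then show "0 \<le> Re (\<Sum>i<a + b. cnj (v $ i) * (dsum X Y *\<^sub>v v) $ i)"
    using X(2) Y(2) v12 unfolding psd_def by simp
qed

lemma mtrace_dsum:
  "X \<in> carrier_mat a a \<Longrightarrow> Y \<in> carrier_mat b b \<Longrightarrow> mtrace (dsum X Y) = mtrace X + mtrace Y"
  by (simp add: mtrace_def sum_lessThan_add index_dsum[of _ a a _ b b])

lemma density_dsum_zero:
  assumes "density a \<rho>" shows "density (a + b) (dsum \<rho> (0\<^sub>m b b))"
proof -
  have "\<rho> \<in> carrier_mat a a" "dag \<rho> = \<rho>" "psd a \<rho>" "mtrace \<rho> = 1"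
    using assms unfolding density_iff hermitian_def by auto
  then show ?thesis
    by (simp add: density_iff hermitian_def dag_dsum psd_dsum psd_zero mtrace_dsum[of _ a _ b])
qed

lemma density_zero_dsum:
  assumes "density b \<rho>" shows "density (a + b) (dsum (0\<^sub>m a a) \<rho>)"
proof -
  have "\<rho> \<in> carrier_mat b b" "dag \<rho> = \<rho>" "psd b \<rho>" "mtrace \<rho> = 1"
    using assms unfolding density_iff hermitian_def by auto
  then show ?thesis
    by (simp add: density_iff hermitian_def dag_dsum psd_dsum psd_zero mtrace_dsum[of _ a _ b])
qed

definition basis_proj :: "nat \<Rightarrow> nat \<Rightarrow> complex mat" where
  "basis_proj n j = mat n n (\<lambda>(p,q). if p = j \<and> q = j then 1 else 0)"

lemma basis_proj_carrier [simp]: "basis_proj n j \<in> carrier_mat n n"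
  unfolding basis_proj_def by auto

lemma dim_basis_proj [simp]: "dim_row (basis_proj n j) = n" "dim_col (basis_proj n j) = n"
  unfolding basis_proj_def by auto

lemma index_basis_proj:
  "p < n \<Longrightarrow> q < n \<Longrightarrow> basis_proj n j $$ (p,q) = (if p = j \<and> q = j then 1 else 0)"
  unfolding basis_proj_def by auto

lemma basis_proj_mult_vec:
  assumes "v \<in> carrier_vec n" "j < n"
  shows "basis_proj n j *\<^sub>v v = vec n (\<lambda>i. if i = j then v $ j else 0)"
  by (rule eq_vecI)
     (use assms in \<open>auto simp: index_basis_proj if_distrib[of "\<lambda>x. x * _"] sum.delta carrier_vecD
        cong: if_cong\<close>)

lemma mult_basis_proj:
  assumes "K \<in> carrier_mat n n" "j < n"
  shows "K * basis_proj n j = mat n n (\<lambda>(p,q). if q = j then K $$ (p,j) else 0)"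
  by (rule eq_matI)
     (use assms in \<open>auto simp: index_basis_proj if_distrib[of "\<lambda>x. _ * x"] sum.delta cong: if_cong\<close>)

lemma density_basis_proj:
  assumes "j < n" shows "density n (basis_proj n j)"
proof -
  have "psd n (basis_proj n j)"
    using assms by (auto simp: psd_def basis_proj_mult_vec if_distrib[of "\<lambda>x. _ * x"] sum.delta
        cong: if_cong)
  moreover have "hermitian n (basis_proj n j)"
    unfolding hermitian_def by (auto intro!: eq_matI simp: basis_proj_def)
  ultimately show ?thesis using assms by (simp add: density_iff mtrace_def basis_proj_def)
qed

lemma index_sandwich_basis_proj:
  assumes "K \<in> carrier_mat n n" "j < n" "m < n"
  shows "(K * basis_proj n j * dag K) $$ (m,m) = complex_of_real ((cmod (K $$ (m,j)))\<^sup>2)"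
proof -
  have "(K * basis_proj n j * dag K) $$ (m,m) = K $$ (m,j) * cnj (K $$ (m,j))"
    using assms by (auto simp: mult_basis_proj if_distrib[of "\<lambda>x. x * _"] sum.delta cong: if_cong)
  then show ?thesis by (simp only: complex_norm_square)
qed

lemma kraus_rep_entry_zero:
  assumes KS: "is_kraus_rep n n \<Phi> Ks" and j: "j < n" and M: "M \<subseteq> {..<n}"
    and zero: "(\<Sum>m\<in>M. \<Phi> (basis_proj n j) $$ (m,m)) = 0"
    and K: "K \<in> set Ks" and m: "m \<in> M"
  shows "K $$ (m,j) = 0"
proof -
  have Ks: "\<And>K. K \<in> set Ks \<Longrightarrow> K \<in> carrier_mat n n" using KS by (rule kraus_rep_carrier)
  have "\<Phi> (basis_proj n j) $$ (m,m) = complex_of_real (\<Sum>K\<leftarrow>Ks. (cmod (K $$ (m,j)))\<^sup>2)"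
    if "m \<in> M" for m
  proof -
    have "\<Phi> (basis_proj n j) $$ (m,m) = (\<Sum>K\<leftarrow>Ks. (K * basis_proj n j * dag K) $$ (m,m))"
      using that M Ks
      by (subst kraus_rep_apply[OF KS density_basis_proj[OF j]], subst index_msum_map) auto
    also have "\<dots> = (\<Sum>K\<leftarrow>Ks. complex_of_real ((cmod (K $$ (m,j)))\<^sup>2))"
      using that M Ks j by (intro arg_cong[where f=sum_list] map_cong)
        (auto simp: index_sandwich_basis_proj simp del: of_real_power)
    finally show ?thesis by (simp add: comp_def flip: sum_list_of_real)
  qed
  then have "(\<Sum>m\<in>M. \<Sum>K\<leftarrow>Ks. (cmod (K $$ (m,j)))\<^sup>2) = 0"
    using zero by (simp del: of_real_power flip: of_real_sum)
  moreover have "finite M" using M finite_subset by blast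
  ultimately have "(\<Sum>K\<leftarrow>Ks. (cmod (K $$ (m,j)))\<^sup>2) = 0"
    using m by (subst (asm) sum_nonneg_eq_0_iff) (auto intro!: sum_list_nonneg)
  then have "(cmod (K $$ (m,j)))\<^sup>2 = 0"
    using K by (subst (asm) sum_list_nonneg_eq_0_iff) auto
  then show ?thesis by simp
qed

section \<open>Kraus representations of superpositions\<close>

lemma kraus_rep_eq_map2_dsum_blocks:
  assumes KS: "is_kraus_rep (a + b) (a + b) \<Phi> Ks"
    and A_to_A: "\<And>j. j < a \<Longrightarrow> (\<Sum>m\<in>{a..<a + b}. \<Phi> (basis_proj (a + b) j) $$ (m,m)) = 0"
    and B_to_B: "\<And>j. a \<le> j \<Longrightarrow> j < a + b \<Longrightarrow> (\<Sum>m<a. \<Phi> (basis_proj (a + b) j) $$ (m,m)) = 0"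
  shows "Ks = map2 dsum (map (blockA a) Ks) (map (blockB a b) Ks)"
proof -
  have "K = dsum (blockA a K) (blockB a b K)" if K: "K \<in> set Ks" for K
  proof (rule eq_matI)
    fix i j assume "i < dim_row (dsum (blockA a K) (blockB a b K))"
      "j < dim_col (dsum (blockA a K) (blockB a b K))"
    then have ij: "i < a + b" "j < a + b" by auto
    have "K $$ (i,j) = 0" if "(i < a) \<noteq> (j < a)"
    proof (cases "j < a")
      case True
      have "{a..<a + b} \<subseteq> {..<a + b}" by auto
      then show ?thesis
        using kraus_rep_entry_zero[OF KS ij(2) _ A_to_A[OF True] K, of i] True that ij by auto
    next
      case False
      then show ?thesis
        using kraus_rep_entry_zero[OF KS ij(2) _ B_to_B K, of i] that ij by auto
    qed
    then show "K $$ (i,j) = dsum (blockA a K) (blockB a b K) $$ (i,j)"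
      using ij by (auto simp: index_dsum[of _ a a _ b b] blockA_def blockB_def)
  qed (use kraus_rep_carrier[OF KS K] in auto)
  then show ?thesis unfolding map2_map_map by (intro map_idI[symmetric]) simp
qed

lemma no_leakage_if_msum_dag_sandwich_fixed:
  assumes KS: "is_kraus_rep n n \<Phi> Ks" and P: "P \<in> carrier_mat n n"
    and fixed: "msum n n (map (\<lambda>K. dag K * P * K) Ks) = P"
  shows "no_leakage n P \<Phi>"
  unfolding no_leakage_def
proof (intro allI impI)
  fix \<rho> assume \<rho>: "density n \<rho> \<and> mtrace (\<rho> * P) = 1"
  then have carrier: "\<rho> \<in> carrier_mat n n" by (simp add: density_carrier)
  have "mtrace (P * \<Phi> \<rho>) = mtrace (P * \<rho>)"
    using mtrace_mult_msum_sandwich[OF P carrier kraus_rep_carrier[OF KS]] \<rho>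
    by (simp add: kraus_rep_apply[OF KS] fixed)
  also have "\<dots> = mtrace (\<rho> * P)" using P carrier by (rule mtrace_mult_comm)
  finally show "mtrace (P * \<Phi> \<rho>) = 1" using \<rho> by simp
qed

lemma projA_carrier [simp]: "projA a b \<in> carrier_mat (a + b) (a + b)"
  unfolding projA_def by auto

lemma projB_carrier [simp]: "projB a b \<in> carrier_mat (a + b) (a + b)"
  unfolding projB_def by auto

lemma dim_projA [simp]: "dim_row (projA a b) = a + b" "dim_col (projA a b) = a + b"
  unfolding projA_def by auto

lemma dim_projB [simp]: "dim_row (projB a b) = a + b" "dim_col (projB a b) = a + b"
  unfolding projB_def by auto

lemma index_projA_mult:
  assumes "M \<in> carrier_mat (a + b) n" "i < a + b" "j < n"
  shows "(projA a b * M) $$ (i,j) = (if i < a then M $$ (i,j) else 0)"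
proof -
  have "projA a b $$ (i,l) = (if i = l \<and> i < a then 1 else 0)" if "l < a + b" for l
    using assms that by (auto simp: projA_def index_dsum[of _ a a _ b b])
  then show ?thesis
    using assms by (auto simp: if_distrib[of "\<lambda>x. x * _"] sum.delta cong: if_cong)
qed

lemma index_projB_mult:
  assumes "M \<in> carrier_mat (a + b) n" "i < a + b" "j < n"
  shows "(projB a b * M) $$ (i,j) = (if i < a then 0 else M $$ (i,j))"
proof -
  have "projB a b $$ (i,l) = (if i = l \<and> \<not> i < a then 1 else 0)" if "l < a + b" for l
    using assms that by (auto simp: projB_def index_dsum[of _ a a _ b b])
  then show ?thesis
    using assms by (auto simp: if_distrib[of "\<lambda>x. x * _"] sum.delta cong: if_cong)
qed

lemma sum_lessThan_split: "(\<Sum>i<a + b. f i) = (\<Sum>i<a. f i) + (\<Sum>i\<in>{a..<a + (b::nat)}. f i)"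
  by (simp add: lessThan_atLeast0 sum.atLeastLessThan_concat)

lemma mtrace_split_sectors:
  "M \<in> carrier_mat (a + b) (a + b) \<Longrightarrow>
   mtrace M = (\<Sum>m<a. M $$ (m,m)) + (\<Sum>m\<in>{a..<a + b}. M $$ (m,m))"
  by (simp add: mtrace_def sum_lessThan_split)

lemma mtrace_projA_mult:
  assumes "M \<in> carrier_mat (a + b) (a + b)"
  shows "mtrace (projA a b * M) = (\<Sum>m<a. M $$ (m,m))"
proof -
  have "mtrace (projA a b * M) = (\<Sum>i<a + b. if i < a then M $$ (i,i) else 0)"
    using assms by (simp add: mtrace_def index_projA_mult del: index_mult_mat_sum)
  then show ?thesis by (simp add: sum_lessThan_split cong: sum.cong_simp)
qed

lemma mtrace_projB_mult:
  assumes "M \<in> carrier_mat (a + b) (a + b)"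
  shows "mtrace (projB a b * M) = (\<Sum>m\<in>{a..<a + b}. M $$ (m,m))"
proof -
  have "mtrace (projB a b * M) = (\<Sum>i<a + b. if i < a then 0 else M $$ (i,i))"
    using assms by (simp add: mtrace_def index_projB_mult del: index_mult_mat_sum)
  then show ?thesis by (simp add: sum_lessThan_split cong: sum.cong_simp)
qed

lemma no_leakage_kraus_rep_eq_map2_dsum_blocks:
  assumes NA: "no_leakage (a + b) (projA a b) \<Phi>" and NB: "no_leakage (a + b) (projB a b) \<Phi>"
    and KS: "is_kraus_rep (a + b) (a + b) \<Phi> Ks"
  shows "Ks = map2 dsum (map (blockA a) Ks) (map (blockB a b) Ks)"
proof -
  have \<rho>: "density (a + b) (basis_proj (a + b) j)" if "j < a + b" for j
    using that by (rule density_basis_proj)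
  have out: "\<Phi> (basis_proj (a + b) j) \<in> carrier_mat (a + b) (a + b)" if "j < a + b" for j
    using KS \<rho>[OF that] by (rule kraus_rep_image_carrier)
  have total: "(\<Sum>m<a. \<Phi> (basis_proj (a + b) j) $$ (m,m))
      + (\<Sum>m\<in>{a..<a + b}. \<Phi> (basis_proj (a + b) j) $$ (m,m)) = 1" if "j < a + b" for j
    using kraus_rep_mtrace[OF KS \<rho>[OF that]] mtrace_split_sectors[OF out[OF that]] by simp
  show ?thesis
  proof (rule kraus_rep_eq_map2_dsum_blocks[OF KS])
    fix j assume j: "j < a"
    then have "mtrace (basis_proj (a + b) j * projA a b) = 1"
      by (simp add: mtrace_mult_comm[of _ "a + b" "a + b"] mtrace_projA_mult index_basis_proj)
    then have "mtrace (projA a b * \<Phi> (basis_proj (a + b) j)) = 1"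
      using NA \<rho> j unfolding no_leakage_def by simp
    then show "(\<Sum>m\<in>{a..<a + b}. \<Phi> (basis_proj (a + b) j) $$ (m,m)) = 0"
      using total[of j] j by (simp add: mtrace_projA_mult[OF out])
  next
    fix j assume j: "a \<le> j" "j < a + b"
    then have "mtrace (basis_proj (a + b) j * projB a b) = 1"
      by (simp add: mtrace_mult_comm[of _ "a + b" "a + b"] mtrace_projB_mult index_basis_proj)
    then have "mtrace (projB a b * \<Phi> (basis_proj (a + b) j)) = 1"
      using NB \<rho> j unfolding no_leakage_def by simp
    then show "(\<Sum>m<a. \<Phi> (basis_proj (a + b) j) $$ (m,m)) = 0"
      using total[of j] j by (simp add: mtrace_projB_mult[OF out])
  qed
qed

definition acts_on_sectors ::
    "nat \<Rightarrow> nat \<Rightarrow> (complex mat \<Rightarrow> complex mat) \<Rightarrow> (complex mat \<Rightarrow> complex mat) \<Rightarrow> (complex mat \<Rightarrow> complex mat) \<Rightarrow> bool" where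
  "acts_on_sectors a b S CA CB \<longleftrightarrow>
     (\<forall>\<rho>. density a \<rho> \<longrightarrow> S (dsum \<rho> (0\<^sub>m b b)) = dsum (CA \<rho>) (0\<^sub>m b b)) \<and>
     (\<forall>\<rho>. density b \<rho> \<longrightarrow> S (dsum (0\<^sub>m a a) \<rho>) = dsum (0\<^sub>m a a) (CB \<rho>))"

lemma basis_proj_dsum_zero: "j < a \<Longrightarrow> basis_proj (a + b) j = dsum (basis_proj a j) (0\<^sub>m b b)"
  by (rule eq_matI) (auto simp: index_dsum[of _ a a _ b b] index_basis_proj)

lemma basis_proj_zero_dsum: "a \<le> j \<Longrightarrow> basis_proj (a + b) j = dsum (0\<^sub>m a a) (basis_proj b (j - a))"
  by (rule eq_matI) (auto simp: index_dsum[of _ a a _ b b] index_basis_proj)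

lemma acts_on_sectors_kraus_rep_eq_map2_dsum_blocks:
  assumes S: "acts_on_sectors a b CS CA CB" and CA: "is_channel a a CA" and CB: "is_channel b b CB"
    and KS: "is_kraus_rep (a + b) (a + b) CS Ks"
  shows "Ks = map2 dsum (map (blockA a) Ks) (map (blockB a b) Ks)"
proof (rule kraus_rep_eq_map2_dsum_blocks[OF KS])
  fix j assume j: "j < a"
  then have \<rho>: "density a (basis_proj a j)" by (rule density_basis_proj)
  have "CS (basis_proj (a + b) j) = dsum (CA (basis_proj a j)) (0\<^sub>m b b)"
    using S \<rho> j unfolding acts_on_sectors_def by (simp add: basis_proj_dsum_zero)
  then show "(\<Sum>m\<in>{a..<a + b}. CS (basis_proj (a + b) j) $$ (m,m)) = 0"
    using channel_image_carrier[OF CA \<rho>] by (auto simp: index_dsum[of _ a a _ b b] intro!: sum.neutral)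
next
  fix j assume j: "a \<le> j" "j < a + b"
  then have \<rho>: "density b (basis_proj b (j - a))" by (intro density_basis_proj) simp
  have "CS (basis_proj (a + b) j) = dsum (0\<^sub>m a a) (CB (basis_proj b (j - a)))"
    using S \<rho> j unfolding acts_on_sectors_def by (simp add: basis_proj_zero_dsum)
  then show "(\<Sum>m<a. CS (basis_proj (a + b) j) $$ (m,m)) = 0"
    using channel_image_carrier[OF CB \<rho>] by (auto simp: index_dsum[of _ a a _ b b] intro!: sum.neutral)
qed

lemma msum_sandwich_zero:
  assumes "\<And>K. K \<in> set Ks \<Longrightarrow> K \<in> carrier_mat n n"
  shows "msum n n (map (\<lambda>K. K * 0\<^sub>m n n * dag K) Ks) = 0\<^sub>m n n"
proof -
  have "msum n n (map (\<lambda>K. K * 0\<^sub>m n n * dag K) Ks) = msum n n (map (\<lambda>_. 0\<^sub>m n n) Ks)"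
    by (intro msum_map_cong) (metis assms dag_carrier left_mult_zero_mat right_mult_zero_mat)
  then show ?thesis by (simp add: msum_map_zero)
qed

lemma msum_dag_sandwich_zero:
  assumes "\<And>K. K \<in> set Ks \<Longrightarrow> K \<in> carrier_mat n n"
  shows "msum n n (map (\<lambda>K. dag K * 0\<^sub>m n n * K) Ks) = 0\<^sub>m n n"
proof -
  have "msum n n (map (\<lambda>K. dag K * 0\<^sub>m n n * K) Ks) = msum n n (map (\<lambda>_. 0\<^sub>m n n) Ks)"
    by (intro msum_map_cong) (metis assms dag_carrier left_mult_zero_mat right_mult_zero_mat)
  then show ?thesis by (simp add: msum_map_zero)
qed

context
  fixes As Bs :: "complex mat list" and a b :: nat
  assumes len: "length As = length Bs"
    and As: "\<And>A. A \<in> set As \<Longrightarrow> A \<in> carrier_mat a a"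
    and Bs: "\<And>B. B \<in> set Bs \<Longrightarrow> B \<in> carrier_mat b b"
begin

lemma dsum_kraus_rep_acts_on_sectors:
  assumes KA: "is_kraus_rep a a CA As" and KB: "is_kraus_rep b b CB Bs"
    and KS: "is_kraus_rep (a + b) (a + b) CS (map2 dsum As Bs)"
  shows "acts_on_sectors a b CS CA CB"
  unfolding acts_on_sectors_def
proof (intro conjI allI impI)
  fix \<rho> assume \<rho>: "density a \<rho>"
  show "CS (dsum \<rho> (0\<^sub>m b b)) = dsum (CA \<rho>) (0\<^sub>m b b)"
    using kraus_rep_apply[OF KS density_dsum_zero[OF \<rho>]] kraus_rep_apply[OF KA \<rho>]
    by (simp add: msum_sandwich_map2_dsum[OF len As Bs] density_carrier[OF \<rho>]
        msum_sandwich_zero Bs del: map_map)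
next
  fix \<rho> assume \<rho>: "density b \<rho>"
  show "CS (dsum (0\<^sub>m a a) \<rho>) = dsum (0\<^sub>m a a) (CB \<rho>)"
    using kraus_rep_apply[OF KS density_zero_dsum[OF \<rho>]] kraus_rep_apply[OF KB \<rho>]
    by (simp add: msum_sandwich_map2_dsum[OF len As Bs] density_carrier[OF \<rho>]
        msum_sandwich_zero As del: map_map)
qed

lemma dsum_kraus_rep_completeness:
  assumes KS: "is_kraus_rep (a + b) (a + b) CS (map2 dsum As Bs)"
  shows "msum a a (map (\<lambda>A. dag A * A) As) = 1\<^sub>m a" "msum b b (map (\<lambda>B. dag B * B) Bs) = 1\<^sub>m b"
proof -
  let ?XA = "msum a a (map (\<lambda>A. dag A * A) As)" and ?XB = "msum b b (map (\<lambda>B. dag B * B) Bs)"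
  have XA: "?XA \<in> carrier_mat a a" and XB: "?XB \<in> carrier_mat b b"
    using As Bs by (auto intro!: msum_map_carrier)
  have eq: "dsum ?XA ?XB = dsum (1\<^sub>m a) (1\<^sub>m b)"
    using msum_dag_mult_self_map2_dsum[OF len As Bs] kraus_rep_completeness[OF KS]
    by (simp add: dsum_one)
  have "?XA = blockA a (dsum ?XA ?XB)" using XA by simp
  then show "?XA = 1\<^sub>m a" unfolding eq by simp
  have "?XB = blockB a b (dsum ?XA ?XB)" using XA XB by simp
  then show "?XB = 1\<^sub>m b" unfolding eq by simp
qed

lemma dsum_kraus_rep_no_leakage:
  assumes KS: "is_kraus_rep (a + b) (a + b) CS (map2 dsum As Bs)"
  shows "no_leakage (a + b) (projA a b) CS" "no_leakage (a + b) (projB a b) CS"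
proof -
  have "msum a a (map (\<lambda>A. dag A * 1\<^sub>m a * A) As) = 1\<^sub>m a"
    "msum b b (map (\<lambda>B. dag B * 1\<^sub>m b * B) Bs) = 1\<^sub>m b"
    using dsum_kraus_rep_completeness[OF KS] msum_dag_sandwich_one[OF As] msum_dag_sandwich_one[OF Bs]
    by simp_all
  then show "no_leakage (a + b) (projA a b) CS" "no_leakage (a + b) (projB a b) CS"
    by (auto intro!: no_leakage_if_msum_dag_sandwich_fixed[OF KS]
        simp: projA_def projB_def msum_dag_sandwich_map2_dsum[OF len As Bs]
          msum_dag_sandwich_zero As Bs simp del: map_map)
qed

lemma acts_on_sectors_dsum_kraus_rep:
  assumes S: "acts_on_sectors a b CS CA CB" and CA: "is_channel a a CA" and CB: "is_channel b b CB"
    and KS: "is_kraus_rep (a + b) (a + b) CS (map2 dsum As Bs)"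
  shows "is_kraus_rep a a CA As" "is_kraus_rep b b CB Bs"
proof -
  have act_A: "CA \<rho> = msum a a (map (\<lambda>A. A * \<rho> * dag A) As)" if \<rho>: "density a \<rho>" for \<rho>
  proof -
    have "dsum (CA \<rho>) (0\<^sub>m b b) = CS (dsum \<rho> (0\<^sub>m b b))"
      using S \<rho> unfolding acts_on_sectors_def by simp
    also have "\<dots> = dsum (msum a a (map (\<lambda>A. A * \<rho> * dag A) As)) (0\<^sub>m b b)"
      using kraus_rep_apply[OF KS density_dsum_zero[OF \<rho>]]
      by (simp add: msum_sandwich_map2_dsum[OF len As Bs] density_carrier[OF \<rho>]
        msum_sandwich_zero Bs del: map_map)
    finally have "blockA a (dsum (CA \<rho>) (0\<^sub>m b b)) = blockA a (dsum (msum a a (map (\<lambda>A. A * \<rho> * dag A) As)) (0\<^sub>m b b))"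
      by simp
    moreover have "msum a a (map (\<lambda>A. A * \<rho> * dag A) As) \<in> carrier_mat a a"
      using As density_carrier[OF \<rho>] by (auto intro!: msum_map_carrier)
    ultimately show ?thesis using channel_image_carrier[OF CA \<rho>] by simp
  qed
  have act_B: "CB \<rho> = msum b b (map (\<lambda>B. B * \<rho> * dag B) Bs)" if \<rho>: "density b \<rho>" for \<rho>
  proof -
    have "dsum (0\<^sub>m a a) (CB \<rho>) = CS (dsum (0\<^sub>m a a) \<rho>)"
      using S \<rho> unfolding acts_on_sectors_def by simp
    also have "\<dots> = dsum (0\<^sub>m a a) (msum b b (map (\<lambda>B. B * \<rho> * dag B) Bs))"
      using kraus_rep_apply[OF KS density_zero_dsum[OF \<rho>]]
      by (simp add: msum_sandwich_map2_dsum[OF len As Bs] density_carrier[OF \<rho>]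
        msum_sandwich_zero As del: map_map)
    finally have "blockB a b (dsum (0\<^sub>m a a) (CB \<rho>)) = blockB a b (dsum (0\<^sub>m a a) (msum b b (map (\<lambda>B. B * \<rho> * dag B) Bs)))"
      by simp
    moreover have "msum b b (map (\<lambda>B. B * \<rho> * dag B) Bs) \<in> carrier_mat b b"
      using Bs density_carrier[OF \<rho>] by (auto intro!: msum_map_carrier)
    ultimately show ?thesis using channel_image_carrier[OF CB \<rho>] by simp
  qed
  show "is_kraus_rep a a CA As" "is_kraus_rep b b CB Bs"
    unfolding is_kraus_rep_def using As Bs dsum_kraus_rep_completeness[OF KS] act_A act_B by auto
qed

end

lemma acts_on_sectors_kraus_rep_blocks:
  assumes S: "acts_on_sectors a b CS CA CB" and CA: "is_channel a a CA" and CB: "is_channel b b CB"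
    and KS: "is_kraus_rep (a + b) (a + b) CS Ks"
  shows "is_kraus_rep a a CA (map (blockA a) Ks)" "is_kraus_rep b b CB (map (blockB a b) Ks)"
proof -
  have KS': "is_kraus_rep (a + b) (a + b) CS (map2 dsum (map (blockA a) Ks) (map (blockB a b) Ks))"
    using KS acts_on_sectors_kraus_rep_eq_map2_dsum_blocks[OF S CA CB KS] by simp
  have len: "length (map (blockA a) Ks) = length (map (blockB a b) Ks)" by simp
  show "is_kraus_rep a a CA (map (blockA a) Ks)"
    by (rule acts_on_sectors_dsum_kraus_rep(1)[OF len _ _ S CA CB KS']) auto
  show "is_kraus_rep b b CB (map (blockB a b) Ks)"
    by (rule acts_on_sectors_dsum_kraus_rep(2)[OF len _ _ S CA CB KS']) auto
qed

lemma superposition_iff_dsum_kraus_rep: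
  assumes CA: "is_channel a a CA" and CB: "is_channel b b CB" and CS: "is_channel (a + b) (a + b) CS"
  shows "superposition_of a b CS CA CB \<longleftrightarrow>
    (\<exists>As Bs. length As = length Bs \<and> is_kraus_rep a a CA As \<and> is_kraus_rep b b CB Bs \<and>
       is_kraus_rep (a + b) (a + b) CS (map2 dsum As Bs))"
proof
  assume "superposition_of a b CS CA CB"
  then have NA: "no_leakage (a + b) (projA a b) CS" and NB: "no_leakage (a + b) (projB a b) CS"
    and RA: "restriction_A_is a b CS CA" and RB: "restriction_B_is a b CS CB"
    unfolding superposition_of_def by auto
  obtain Ks where KS: "is_kraus_rep (a + b) (a + b) CS Ks" using CS unfolding is_channel_def by auto
  have "is_kraus_rep (a + b) (a + b) CS (map2 dsum (map (blockA a) Ks) (map (blockB a b) Ks))"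
    using KS no_leakage_kraus_rep_eq_map2_dsum_blocks[OF NA NB KS] by simp
  moreover have "is_kraus_rep a a CA (map (blockA a) Ks)" "is_kraus_rep b b CB (map (blockB a b) Ks)"
    using RA RB KS unfolding restriction_A_is_def restriction_B_is_def by auto
  ultimately show "\<exists>As Bs. length As = length Bs \<and> is_kraus_rep a a CA As \<and> is_kraus_rep b b CB Bs \<and>
       is_kraus_rep (a + b) (a + b) CS (map2 dsum As Bs)"
    by (metis length_map)
next
  assume "\<exists>As Bs. length As = length Bs \<and> is_kraus_rep a a CA As \<and> is_kraus_rep b b CB Bs \<and>
       is_kraus_rep (a + b) (a + b) CS (map2 dsum As Bs)"
  then obtain As Bs where len: "length As = length Bs" and KA: "is_kraus_rep a a CA As"
    and KB: "is_kraus_rep b b CB Bs" and KS: "is_kraus_rep (a + b) (a + b) CS (map2 dsum As Bs)"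
    by blast
  note blocks = len kraus_rep_carrier[OF KA] kraus_rep_carrier[OF KB]
  have S: "acts_on_sectors a b CS CA CB"
    using dsum_kraus_rep_acts_on_sectors[OF blocks KA KB KS] .
  show "superposition_of a b CS CA CB"
    unfolding superposition_of_def restriction_A_is_def restriction_B_is_def
    using dsum_kraus_rep_no_leakage[OF blocks KS]
      acts_on_sectors_kraus_rep_blocks[OF S CA CB] by blast
qed

lemma acts_on_sectors_imp_superposition:
  assumes S: "acts_on_sectors a b CS CA CB"
    and CA: "is_channel a a CA" and CB: "is_channel b b CB" and CS: "is_channel (a + b) (a + b) CS"
  shows "superposition_of a b CS CA CB"
proof -
  obtain Ks where KS: "is_kraus_rep (a + b) (a + b) CS Ks" using CS unfolding is_channel_def by auto
  have "is_kraus_rep (a + b) (a + b) CS (map2 dsum (map (blockA a) Ks) (map (blockB a b) Ks))"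
    using KS acts_on_sectors_kraus_rep_eq_map2_dsum_blocks[OF S CA CB KS] by simp
  then show ?thesis
    unfolding superposition_iff_dsum_kraus_rep[OF CA CB CS]
    using acts_on_sectors_kraus_rep_blocks[OF S CA CB KS] by (metis length_map)
qed

section \<open>A Hamiltonian dilation of a channel\<close>

lemma tensor_index_div [simp]: "k < e \<Longrightarrow> (i * e + k) div (e::nat) = i"
  by auto

lemma tensor_index_mod [simp]: "k < e \<Longrightarrow> (i * e + k) mod (e::nat) = k"
  by auto

lemma tensor_index_less: "i < n \<Longrightarrow> k < e \<Longrightarrow> i * e + k < n * (e::nat)"
proof -
  assume "i < n" "k < e"
  then have "i * e + k < (i + 1) * e" by simp
  also have "\<dots> \<le> n * e" using \<open>i < n\<close> by (intro mult_right_mono) auto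
  finally show ?thesis .
qed

lemma div_less_of_less_mult: "p < n * e \<Longrightarrow> p div e < (n::nat)"
  by (metis div_less_iff_less_mult mult_zero_right not_less_zero nat_neq_iff mult.commute)

lemma sum_lessThan_Suc_pred: "0 < e \<Longrightarrow> (\<Sum>k<e. g k) = g 0 + (\<Sum>k<e - 1. g (Suc k))"
  by (cases e) (simp_all del: sum.lessThan_Suc add: sum.lessThan_Suc_shift)

text \<open>The environment \<open>\<complex>\<^sup>e\<close> has basis \<open>|0\<rangle>, \<dots>, |e - 1\<rangle>\<close>, and \<open>|i\<rangle> \<otimes> |k\<rangle>\<close> has index \<open>i * e + k\<close>
  (as in \<^const>\<open>kron\<close>). For Kraus operators \<open>K\<^sub>0, \<dots>, K\<^sub>e\<^sub>-\<^sub>2\<close>, \<open>kraus_lift\<close> is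
  \<open>J = \<Sum>\<^sub>k K\<^sub>k \<otimes> |k + 1\<rangle>\<langle>0|\<close>, \<open>ground_proj\<close> is \<open>P = 1 \<otimes> |0\<rangle>\<langle>0|\<close>, and \<open>ground_ext\<close> maps \<open>\<rho>\<close> to \<open>\<rho> \<otimes> |0\<rangle>\<langle>0|\<close>.\<close>

definition env_ground :: "nat \<Rightarrow> complex vec" where
  "env_ground e = vec e (\<lambda>i. if i = 0 then 1 else 0)"

definition ground_proj :: "nat \<Rightarrow> nat \<Rightarrow> complex mat" where
  "ground_proj N e = mat N N (\<lambda>(p,q). if p = q \<and> p mod e = 0 then 1 else 0)"

definition kraus_lift :: "nat \<Rightarrow> nat \<Rightarrow> complex mat list \<Rightarrow> complex mat" where
  "kraus_lift n e Ks = mat (n * e) (n * e) (\<lambda>(p,q).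
     if q mod e = 0 \<and> p mod e \<noteq> 0 then (Ks ! (p mod e - 1)) $$ (p div e, q div e) else 0)"

definition ground_ext :: "nat \<Rightarrow> nat \<Rightarrow> complex mat \<Rightarrow> complex mat" where
  "ground_ext n e \<rho> = mat (n * e) (n * e) (\<lambda>(p,q).
     if p mod e = 0 \<and> q mod e = 0 then \<rho> $$ (p div e, q div e) else 0)"

lemma ground_proj_carrier [simp]: "ground_proj N e \<in> carrier_mat N N"
  unfolding ground_proj_def by auto

lemma dim_ground_proj [simp]: "dim_row (ground_proj N e) = N" "dim_col (ground_proj N e) = N"
  unfolding ground_proj_def by auto

lemma index_ground_proj:
  "p < N \<Longrightarrow> q < N \<Longrightarrow> ground_proj N e $$ (p,q) = (if p = q \<and> p mod e = 0 then 1 else 0)"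
  unfolding ground_proj_def by auto

lemma kraus_lift_carrier [simp]: "kraus_lift n e Ks \<in> carrier_mat (n * e) (n * e)"
  unfolding kraus_lift_def by auto

lemma dim_kraus_lift [simp]: "dim_row (kraus_lift n e Ks) = n * e" "dim_col (kraus_lift n e Ks) = n * e"
  unfolding kraus_lift_def by auto

lemma index_kraus_lift:
  "p < n * e \<Longrightarrow> q < n * e \<Longrightarrow> kraus_lift n e Ks $$ (p,q) =
   (if q mod e = 0 \<and> p mod e \<noteq> 0 then (Ks ! (p mod e - 1)) $$ (p div e, q div e) else 0)"
  unfolding kraus_lift_def by auto

lemma ground_ext_carrier [simp]: "ground_ext n e \<rho> \<in> carrier_mat (n * e) (n * e)"
  unfolding ground_ext_def by auto

lemma dim_ground_ext [simp]: "dim_row (ground_ext n e \<rho>) = n * e" "dim_col (ground_ext n e \<rho>) = n * e"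
  unfolding ground_ext_def by auto

lemma index_ground_ext:
  "p < n * e \<Longrightarrow> q < n * e \<Longrightarrow> ground_ext n e \<rho> $$ (p,q) =
   (if p mod e = 0 \<and> q mod e = 0 then \<rho> $$ (p div e, q div e) else 0)"
  unfolding ground_ext_def by auto

lemma index_ground_proj_mult:
  assumes "M \<in> carrier_mat N m" "p < N" "q < m"
  shows "(ground_proj N e * M) $$ (p,q) = (if p mod e = 0 then M $$ (p,q) else 0)"
proof -
  have "(ground_proj N e * M) $$ (p,q) = (\<Sum>l<N. ground_proj N e $$ (p,l) * M $$ (l,q))" using assms by simp
  also have "\<dots> = (\<Sum>l<N. if l = p then (if p mod e = 0 then M $$ (p,q) else 0) else 0)"
    using assms by (intro sum.cong refl) (auto simp: index_ground_proj)
  finally show ?thesis using assms by (simp add: sum.delta')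
qed

lemma index_mult_ground_proj:
  assumes "M \<in> carrier_mat m N" "p < m" "q < N"
  shows "(M * ground_proj N e) $$ (p,q) = (if q mod e = 0 then M $$ (p,q) else 0)"
proof -
  have "(M * ground_proj N e) $$ (p,q) = (\<Sum>l<N. M $$ (p,l) * ground_proj N e $$ (l,q))" using assms by simp
  also have "\<dots> = (\<Sum>l<N. if l = q then (if q mod e = 0 then M $$ (p,q) else 0) else 0)"
    using assms by (intro sum.cong refl) (auto simp: index_ground_proj)
  finally show ?thesis using assms by (simp add: sum.delta')
qed

lemma ground_proj_idem: "ground_proj N e * ground_proj N e = ground_proj N e"
  by (rule eq_matI) (auto simp: index_ground_proj_mult[of _ N N] index_ground_proj simp del: index_mult_mat_sum)

lemma dag_ground_proj: "dag (ground_proj N e) = ground_proj N e"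
  by (rule eq_matI) (auto simp: index_ground_proj)

lemma kraus_lift_mult_ground_proj: "kraus_lift n e Ks * ground_proj (n * e) e = kraus_lift n e Ks"
  by (rule eq_matI) (auto simp: index_mult_ground_proj[of _ "n * e"] index_kraus_lift simp del: index_mult_mat_sum)

lemma ground_proj_mult_kraus_lift: "ground_proj (n * e) e * kraus_lift n e Ks = 0\<^sub>m (n * e) (n * e)"
  by (rule eq_matI) (auto simp: index_ground_proj_mult[of _ "n * e" "n * e"] index_kraus_lift simp del: index_mult_mat_sum)

lemma dag_kraus_lift_mult_ground_proj: "dag (kraus_lift n e Ks) * ground_proj (n * e) e = 0\<^sub>m (n * e) (n * e)"
  by (rule eq_matI) (auto simp: index_mult_ground_proj[of _ "n * e"] index_kraus_lift simp del: index_mult_mat_sum)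

lemma ground_proj_mult_ground_ext: "ground_proj (n * e) e * ground_ext n e \<rho> = ground_ext n e \<rho>"
  by (rule eq_matI) (auto simp: index_ground_proj_mult[of _ "n * e" "n * e"] index_ground_ext simp del: index_mult_mat_sum)

lemma index_msum_dag_mult_self:
  assumes Ks: "\<And>K. K \<in> set Ks \<Longrightarrow> K \<in> carrier_mat n n" and ij: "i < n" "j < n"
  shows "msum n n (map (\<lambda>K. dag K * K) Ks) $$ (i,j) =
    (\<Sum>k<length Ks. \<Sum>l<n. cnj ((Ks ! k) $$ (l,i)) * (Ks ! k) $$ (l,j))"
proof -
  have "msum n n (map (\<lambda>K. dag K * K) Ks) $$ (i,j) = (\<Sum>K\<leftarrow>Ks. (dag K * K) $$ (i,j))"
    using Ks ij by (intro index_msum_map) auto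
  also have "\<dots> = (\<Sum>k<length Ks. (dag (Ks ! k) * Ks ! k) $$ (i,j))"
    by (simp add: sum_list_sum_nth atLeast0LessThan)
  also have "\<dots> = (\<Sum>k<length Ks. \<Sum>l<n. cnj ((Ks ! k) $$ (l,i)) * (Ks ! k) $$ (l,j))"
  proof (intro sum.cong refl)
    fix k assume "k \<in> {..<length Ks}"
    then have "Ks ! k \<in> carrier_mat n n" using Ks by auto
    then show "(dag (Ks ! k) * Ks ! k) $$ (i,j) = (\<Sum>l<n. cnj ((Ks ! k) $$ (l,i)) * (Ks ! k) $$ (l,j))"
      using ij by simp
  qed
  finally show ?thesis .
qed

definition dilation_W :: "nat \<Rightarrow> nat \<Rightarrow> complex mat list \<Rightarrow> complex mat" where
  "dilation_W n e Ks = ground_proj (n * e) e - kraus_lift n e Ks"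

definition dilation_Q :: "nat \<Rightarrow> nat \<Rightarrow> complex mat list \<Rightarrow> complex mat" where
  "dilation_Q n e Ks = dilation_W n e Ks * dag (dilation_W n e Ks)"

definition dilation_hamiltonian :: "nat \<Rightarrow> nat \<Rightarrow> complex mat list \<Rightarrow> complex mat" where
  "dilation_hamiltonian n e Ks = complex_of_real (pi / 2) \<cdot>\<^sub>m dilation_Q n e Ks"

lemma dilation_W_carrier [simp]: "dilation_W n e Ks \<in> carrier_mat (n * e) (n * e)"
  unfolding dilation_W_def by auto

lemma dilation_Q_carrier [simp]: "dilation_Q n e Ks \<in> carrier_mat (n * e) (n * e)"
  unfolding dilation_Q_def by (rule mult_carrier_mat[OF dilation_W_carrier dag_carrier[OF dilation_W_carrier]])

lemma dim_dilation_W [simp]: "dim_row (dilation_W n e Ks) = n * e" "dim_col (dilation_W n e Ks) = n * e"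
  using carrier_matD[OF dilation_W_carrier[of n e Ks]] by simp_all

lemma dim_dilation_Q [simp]: "dim_row (dilation_Q n e Ks) = n * e" "dim_col (dilation_Q n e Ks) = n * e"
  using carrier_matD[OF dilation_Q_carrier[of n e Ks]] by simp_all

lemma dilation_hamiltonian_carrier [simp]: "dilation_hamiltonian n e Ks \<in> carrier_mat (n * e) (n * e)"
  unfolding dilation_hamiltonian_def by auto

lemma dag_dilation_W: "dag (dilation_W n e Ks) = ground_proj (n * e) e - dag (kraus_lift n e Ks)"
  unfolding dilation_W_def by (simp add: dag_minus[of _ "n * e" "n * e"] dag_ground_proj)

lemma dilation_W_mult_ground_proj: "dilation_W n e Ks * ground_proj (n * e) e = dilation_W n e Ks"
proof -
  have "dilation_W n e Ks * ground_proj (n * e) e =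
        ground_proj (n * e) e * ground_proj (n * e) e - kraus_lift n e Ks * ground_proj (n * e) e"
    unfolding dilation_W_def by (rule minus_mult_distrib_mat) auto
  then show ?thesis by (simp add: ground_proj_idem kraus_lift_mult_ground_proj dilation_W_def)
qed

lemma dag_dilation_Q: "dag (dilation_Q n e Ks) = dilation_Q n e Ks"
  unfolding dilation_Q_def by (simp add: dag_mult[of _ "n * e" "n * e" _ "n * e"])

lemma hermitian_dilation_hamiltonian: "hermitian (n * e) (dilation_hamiltonian n e Ks)"
  unfolding hermitian_def dilation_hamiltonian_def
  by (simp add: dag_smult dag_dilation_Q)

lemma pow_smult_idem:
  fixes Q :: "complex mat"
  assumes Q: "Q \<in> carrier_mat N N" and idem: "Q * Q = Q"
  shows "(z \<cdot>\<^sub>m Q) ^\<^sub>m k = (if k = 0 then 1\<^sub>m N else z ^ k \<cdot>\<^sub>m Q)"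
proof (induction k)
  case 0
  then show ?case using Q by simp
next
  case (Suc k)
  show ?case
  proof (cases "k = 0")
    case True
    then show ?thesis using Q by simp
  next
    case False
    have "(z \<cdot>\<^sub>m Q) ^\<^sub>m Suc k = (z ^ k \<cdot>\<^sub>m Q) * (z \<cdot>\<^sub>m Q)" using Suc False by simp
    also have "\<dots> = z ^ k \<cdot>\<^sub>m (Q * (z \<cdot>\<^sub>m Q))" by (rule mult_smult_assoc_mat) (use Q in auto)
    also have "Q * (z \<cdot>\<^sub>m Q) = z \<cdot>\<^sub>m (Q * Q)" by (rule mult_smult_distrib) (use Q in auto)
    also have "z ^ k \<cdot>\<^sub>m (z \<cdot>\<^sub>m (Q * Q)) = z ^ Suc k \<cdot>\<^sub>m Q" unfolding idem by (rule eq_matI) auto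
    finally show ?thesis by simp
  qed
qed

lemma mexp_smult_idem:
  assumes Q: "Q \<in> carrier_mat N N" and idem: "Q * Q = Q"
  shows "mexp (z \<cdot>\<^sub>m Q) = 1\<^sub>m N + (exp z - 1) \<cdot>\<^sub>m Q"
proof (rule eq_matI)
  fix i j assume "i < dim_row (1\<^sub>m N + (exp z - 1) \<cdot>\<^sub>m Q)" "j < dim_col (1\<^sub>m N + (exp z - 1) \<cdot>\<^sub>m Q)"
  then have ij: "i < N" "j < N" using Q by auto
  let ?d = "(if i = j then 1 else 0) :: complex" and ?q = "Q $$ (i,j)"
  have summand: "((z \<cdot>\<^sub>m Q) ^\<^sub>m k) $$ (i,j) / of_nat (fact k) =
      ?q * (z ^ k / of_nat (fact k)) + (if k = 0 then ?d - ?q else 0)" for k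
    using ij Q by (cases "k = 0") (auto simp: pow_smult_idem[OF Q idem])
  have exp_series: "(\<lambda>k. z ^ k / of_nat (fact k)) sums exp z"
    using exp_converges[of z] by (simp add: scaleR_conv_of_real divide_inverse mult.commute)
  have "(\<lambda>k. ?q * (z ^ k / of_nat (fact k)) + (if k = 0 then ?d - ?q else 0)) sums (?q * exp z + (?d - ?q))"
    by (intro sums_add sums_mult exp_series) (rule sums_single[where f="\<lambda>_. ?d - ?q" and i=0, simplified])
  then have "(\<Sum>k. ((z \<cdot>\<^sub>m Q) ^\<^sub>m k) $$ (i,j) / of_nat (fact k)) = ?q * exp z + (?d - ?q)"
    unfolding summand by (rule sums_unique[symmetric])
  then show "mexp (z \<cdot>\<^sub>m Q) $$ (i,j) = (1\<^sub>m N + (exp z - 1) \<cdot>\<^sub>m Q) $$ (i,j)"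
    using ij Q unfolding mexp_def by (simp add: algebra_simps)
qed (use Q in \<open>auto simp: mexp_def\<close>)

lemma env_ground_unit: "0 < e \<Longrightarrow> unit_vec e (env_ground e)"
  unfolding unit_vec_def env_ground_def by (simp add: if_distrib[of "\<lambda>x. (cmod x)\<^sup>2"] cong: if_cong)

lemma kron_ket_bra_env_ground:
  assumes "\<rho> \<in> carrier_mat n n" "0 < e"
  shows "kron \<rho> (ket_bra (env_ground e)) = ground_ext n e \<rho>"
  by (rule eq_matI)
     (use assms in \<open>auto simp: kron_def ket_bra_def env_ground_def ground_ext_def div_less_of_less_mult\<close>)

lemma dag_ground_ext:
  assumes "dag \<rho> = \<rho>" "\<rho> \<in> carrier_mat n n" "0 < e"
  shows "dag (ground_ext n e \<rho>) = ground_ext n e \<rho>"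
proof (rule eq_matI)
  fix p q assume "p < dim_row (ground_ext n e \<rho>)" "q < dim_col (ground_ext n e \<rho>)"
  then have pq: "p < n * e" "q < n * e" by auto
  have "cnj (\<rho> $$ (q div e, p div e)) = \<rho> $$ (p div e, q div e)"
    using pq assms div_less_of_less_mult by (metis index_dag carrier_matD)
  then show "dag (ground_ext n e \<rho>) $$ (p,q) = ground_ext n e \<rho> $$ (p,q)"
    using pq by (simp add: index_ground_ext)
qed auto

lemma dag_kraus_lift_mult_ground_ext: "dag (kraus_lift n e Ks) * ground_ext n e \<rho> = 0\<^sub>m (n * e) (n * e)"
proof -
  have "dag (kraus_lift n e Ks) * ground_ext n e \<rho> =
      (dag (kraus_lift n e Ks) * ground_proj (n * e) e) * ground_ext n e \<rho>"
    by (simp add: ground_proj_mult_ground_ext assoc_mult_mat[of _ "n * e" "n * e" _ "n * e" _ "n * e"])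
  then show ?thesis by (simp add: dag_kraus_lift_mult_ground_proj)
qed

lemma index_kraus_lift_mult:
  assumes Y: "Y \<in> carrier_mat (n * e) (n * e)" and i: "i < n" and k: "k < e" and m: "m < n * e"
  shows "(kraus_lift n e Ks * Y) $$ (i * e + k, m) =
    (if k = 0 then 0 else (\<Sum>l<n. (Ks ! (k - 1)) $$ (i,l) * Y $$ (l * e, m)))"
proof -
  have ik: "i * e + k < n * e" using i k by (rule tensor_index_less)
  have "(kraus_lift n e Ks * Y) $$ (i * e + k, m) = (\<Sum>l<n * e. kraus_lift n e Ks $$ (i * e + k, l) * Y $$ (l, m))"
    using Y ik m by simp
  also have "\<dots> = (\<Sum>l<n. \<Sum>k'<e. kraus_lift n e Ks $$ (i * e + k, l * e + k') * Y $$ (l * e + k', m))"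
    by (rule sum_lessThan_mult)
  also have "\<dots> = (\<Sum>l<n. \<Sum>k'<e. if k' = 0 then (if k = 0 then 0 else (Ks ! (k - 1)) $$ (i,l) * Y $$ (l * e, m)) else 0)"
    using k ik by (intro sum.cong refl) (auto simp: index_kraus_lift tensor_index_less)
  finally show ?thesis using k by (simp add: sum.delta')
qed

lemma index_mult_dag_kraus_lift:
  assumes Y: "Y \<in> carrier_mat (n * e) (n * e)" and j: "j < n" and k: "k < e" and l: "l < n * e"
  shows "(Y * dag (kraus_lift n e Ks)) $$ (l, j * e + k) =
    (if k = 0 then 0 else (\<Sum>m<n. Y $$ (l, m * e) * cnj ((Ks ! (k - 1)) $$ (j,m))))"
proof -
  have jk: "j * e + k < n * e" using j k by (rule tensor_index_less)
  have "(Y * dag (kraus_lift n e Ks)) $$ (l, j * e + k) =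
      (\<Sum>l'<n * e. Y $$ (l, l') * cnj (kraus_lift n e Ks $$ (j * e + k, l')))"
    using Y jk l by simp
  also have "\<dots> = (\<Sum>m<n. \<Sum>k'<e. Y $$ (l, m * e + k') * cnj (kraus_lift n e Ks $$ (j * e + k, m * e + k')))"
    by (rule sum_lessThan_mult)
  also have "\<dots> = (\<Sum>m<n. \<Sum>k'<e. if k' = 0 then (if k = 0 then 0 else Y $$ (l, m * e) * cnj ((Ks ! (k - 1)) $$ (j,m))) else 0)"
    using k jk by (intro sum.cong refl) (auto simp: index_kraus_lift tensor_index_less)
  finally show ?thesis using k by (simp add: sum.delta')
qed

lemma index_sandwich:
  assumes "K \<in> carrier_mat n n" "\<rho> \<in> carrier_mat n n" "i < n" "j < n"
  shows "(K * \<rho> * dag K) $$ (i,j) = (\<Sum>l<n. K $$ (i,l) * (\<Sum>m<n. \<rho> $$ (l,m) * cnj (K $$ (j,m))))"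
proof -
  have "(K * \<rho> * dag K) $$ (i,j) = (\<Sum>m<n. (\<Sum>l<n. K $$ (i,l) * \<rho> $$ (l,m)) * cnj (K $$ (j,m)))"
    using assms by simp
  also have "\<dots> = (\<Sum>m<n. \<Sum>l<n. K $$ (i,l) * (\<rho> $$ (l,m) * cnj (K $$ (j,m))))"
    by (simp add: sum_distrib_right mult.assoc)
  also have "\<dots> = (\<Sum>l<n. \<Sum>m<n. K $$ (i,l) * (\<rho> $$ (l,m) * cnj (K $$ (j,m))))"
    by (rule sum.swap)
  finally show ?thesis by (simp add: sum_distrib_left)
qed

context
  fixes n e :: nat and Ks :: "complex mat list"
  assumes e: "e = length Ks + 1" and Ks: "\<And>K. K \<in> set Ks \<Longrightarrow> K \<in> carrier_mat n n"
begin

lemma index_dag_kraus_lift_mult_kraus_lift: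
  assumes pq: "p < n * e" "q < n * e"
  shows "(dag (kraus_lift n e Ks) * kraus_lift n e Ks) $$ (p,q) =
    (if p mod e = 0 \<and> q mod e = 0 then msum n n (map (\<lambda>K. dag K * K) Ks) $$ (p div e, q div e) else 0)"
proof -
  let ?J = "kraus_lift n e Ks"
  have e_pos: "0 < e" and e_pred: "e - 1 = length Ks" using e by simp_all
  have "(dag ?J * ?J) $$ (p,q) = (\<Sum>l<n * e. cnj (?J $$ (l,p)) * ?J $$ (l,q))" using pq by simp
  also have "\<dots> = (\<Sum>i<n. \<Sum>k<e. cnj (?J $$ (i * e + k,p)) * ?J $$ (i * e + k,q))"
    by (rule sum_lessThan_mult)
  also have "\<dots> = (\<Sum>i<n. \<Sum>k<e. if p mod e = 0 \<and> q mod e = 0 \<and> k \<noteq> 0 then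
      cnj ((Ks ! (k - 1)) $$ (i, p div e)) * (Ks ! (k - 1)) $$ (i, q div e) else 0)"
    using pq by (intro sum.cong refl) (auto simp: index_kraus_lift tensor_index_less)
  also have "\<dots> = (\<Sum>i<n. \<Sum>k<length Ks. if p mod e = 0 \<and> q mod e = 0 then
      cnj ((Ks ! k) $$ (i, p div e)) * (Ks ! k) $$ (i, q div e) else 0)"
    by (simp only: sum_lessThan_Suc_pred[OF e_pos] e_pred) (simp cong: if_cong)
  also have "\<dots> = (if p mod e = 0 \<and> q mod e = 0 then
      (\<Sum>k<length Ks. \<Sum>i<n. cnj ((Ks ! k) $$ (i, p div e)) * (Ks ! k) $$ (i, q div e)) else 0)"
    by (subst sum.swap) simp
  finally show ?thesis
    using pq by (simp add: index_msum_dag_mult_self[OF Ks] div_less_of_less_mult)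
qed

lemma dag_kraus_lift_mult_kraus_lift:
  assumes complete: "msum n n (map (\<lambda>K. dag K * K) Ks) = 1\<^sub>m n"
  shows "dag (kraus_lift n e Ks) * kraus_lift n e Ks = ground_proj (n * e) e"
proof (rule eq_matI)
  fix p q assume "p < dim_row (ground_proj (n * e) e)" "q < dim_col (ground_proj (n * e) e)"
  then have pq: "p < n * e" "q < n * e" by auto
  have "(p div e = q div e) = (p = q)" if "p mod e = 0" "q mod e = 0"
    using that by (metis div_mult_mod_eq add_0_right)
  then show "(dag (kraus_lift n e Ks) * kraus_lift n e Ks) $$ (p,q) = ground_proj (n * e) e $$ (p,q)"
    using pq by (auto simp: index_dag_kraus_lift_mult_kraus_lift complete index_ground_proj
        div_less_of_less_mult simp del: index_mult_mat_sum)
qed auto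

lemma dag_dilation_W_mult_dilation_W:
  assumes complete: "msum n n (map (\<lambda>K. dag K * K) Ks) = 1\<^sub>m n"
  shows "dag (dilation_W n e Ks) * dilation_W n e Ks = ground_proj (n * e) e + ground_proj (n * e) e"
proof -
  let ?P = "ground_proj (n * e) e" and ?J = "kraus_lift n e Ks"
  have c: "?P \<in> carrier_mat (n * e) (n * e)" "?J \<in> carrier_mat (n * e) (n * e)"
    "dag ?J \<in> carrier_mat (n * e) (n * e)" by auto
  have "dag (dilation_W n e Ks) * dilation_W n e Ks = (?P - dag ?J) * (?P - ?J)"
    unfolding dag_dilation_W by (simp only: dilation_W_def)
  also have "\<dots> = (?P - dag ?J) * ?P - (?P - dag ?J) * ?J"
    by (rule mult_minus_distrib_mat) (use c in auto)
  also have "(?P - dag ?J) * ?P = ?P * ?P - dag ?J * ?P"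
    by (rule minus_mult_distrib_mat) (use c in auto)
  also have "(?P - dag ?J) * ?J = ?P * ?J - dag ?J * ?J"
    by (rule minus_mult_distrib_mat) (use c in auto)
  also have "?P * ?P - dag ?J * ?P - (?P * ?J - dag ?J * ?J) =
      (?P - 0\<^sub>m (n * e) (n * e)) - (0\<^sub>m (n * e) (n * e) - ?P)"
    by (simp only: ground_proj_idem dag_kraus_lift_mult_ground_proj ground_proj_mult_kraus_lift
        dag_kraus_lift_mult_kraus_lift[OF complete])
  also have "\<dots> = ?P + ?P" by (rule eq_matI) auto
  finally show ?thesis .
qed

lemma dilation_Q_mult_dilation_Q:
  assumes complete: "msum n n (map (\<lambda>K. dag K * K) Ks) = 1\<^sub>m n"
  shows "dilation_Q n e Ks * dilation_Q n e Ks = dilation_Q n e Ks + dilation_Q n e Ks"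
proof -
  let ?W = "dilation_W n e Ks" and ?P = "ground_proj (n * e) e"
  have c: "?W \<in> carrier_mat (n * e) (n * e)" "dag ?W \<in> carrier_mat (n * e) (n * e)"
    "?P \<in> carrier_mat (n * e) (n * e)" by auto
  have "?W * dag ?W * (?W * dag ?W) = ?W * (dag ?W * (?W * dag ?W))"
    by (rule assoc_mult_mat) (use c in auto)
  also have "dag ?W * (?W * dag ?W) = (dag ?W * ?W) * dag ?W"
    by (rule assoc_mult_mat[symmetric]) (use c in auto)
  also have "?W * ((dag ?W * ?W) * dag ?W) = (?W * (?P + ?P)) * dag ?W"
    unfolding dag_dilation_W_mult_dilation_W[OF complete] by (rule assoc_mult_mat[symmetric]) (use c in auto)
  also have "?W * (?P + ?P) = ?W * ?P + ?W * ?P" by (rule mult_add_distrib_mat) (use c in auto)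
  also have "\<dots> = ?W + ?W" by (simp only: dilation_W_mult_ground_proj)
  also have "(?W + ?W) * dag ?W = dilation_Q n e Ks + dilation_Q n e Ks"
    unfolding dilation_Q_def by (rule add_mult_distrib_mat) (use c in auto)
  finally show ?thesis unfolding dilation_Q_def .
qed

lemma mexp_dilation_hamiltonian:
  assumes complete: "msum n n (map (\<lambda>K. dag K * K) Ks) = 1\<^sub>m n" and "T \<noteq> 0"
  shows "mexp ((- \<i> * of_real T / of_real T) \<cdot>\<^sub>m dilation_hamiltonian n e Ks) = 1\<^sub>m (n * e) - dilation_Q n e Ks"
proof -
  let ?Q = "(1/2::complex) \<cdot>\<^sub>m dilation_Q n e Ks"
  have Q: "?Q \<in> carrier_mat (n * e) (n * e)" by simp
  have "?Q * ?Q = (1/2::complex) \<cdot>\<^sub>m (dilation_Q n e Ks * ?Q)"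
    by (rule mult_smult_assoc_mat) auto
  also have "dilation_Q n e Ks * ?Q = (1/2::complex) \<cdot>\<^sub>m (dilation_Q n e Ks * dilation_Q n e Ks)"
    by (rule mult_smult_distrib) auto
  also have "(1/2::complex) \<cdot>\<^sub>m ((1/2::complex) \<cdot>\<^sub>m (dilation_Q n e Ks * dilation_Q n e Ks)) = ?Q"
    unfolding dilation_Q_mult_dilation_Q[OF complete] by (rule eq_matI) auto
  finally have idem: "?Q * ?Q = ?Q" .
  have "(- \<i> * of_real T / of_real T) \<cdot>\<^sub>m dilation_hamiltonian n e Ks = (- \<i> * of_real pi) \<cdot>\<^sub>m ?Q"
    using assms(2) unfolding dilation_hamiltonian_def by (rule_tac eq_matI) auto
  then have "mexp ((- \<i> * of_real T / of_real T) \<cdot>\<^sub>m dilation_hamiltonian n e Ks) =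
      1\<^sub>m (n * e) + (exp (- \<i> * of_real pi) - 1) \<cdot>\<^sub>m ?Q"
    using mexp_smult_idem[OF Q idem] by simp
  also have "exp (- \<i> * complex_of_real pi) = -1" by (simp add: exp_minus)
  also have "1\<^sub>m (n * e) + (-1 - 1) \<cdot>\<^sub>m ?Q = 1\<^sub>m (n * e) - dilation_Q n e Ks" by (rule eq_matI) auto
  finally show ?thesis .
qed

lemma index_kraus_lift_sandwich_ground_ext:
  assumes \<rho>: "\<rho> \<in> carrier_mat n n" and ij: "i < n" "j < n" and k: "k < e"
  shows "(kraus_lift n e Ks * (ground_ext n e \<rho> * dag (kraus_lift n e Ks))) $$ (i * e + k, j * e + k) =
    (if k = 0 then 0 else (Ks ! (k - 1) * \<rho> * dag (Ks ! (k - 1))) $$ (i,j))"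
proof (cases "k = 0")
  case False
  let ?X = "ground_ext n e \<rho>" and ?J = "kraus_lift n e Ks" and ?K = "Ks ! (k - 1)"
  have K: "?K \<in> carrier_mat n n" using Ks False k e by (simp add: nth_mem)
  have e_pos: "0 < e" using k by simp
  have "(?X * dag ?J) $$ (l * e, j * e + k) = (\<Sum>m<n. \<rho> $$ (l,m) * cnj (?K $$ (j,m)))" if l: "l < n" for l
  proof -
    have le: "l * e < n * e" using tensor_index_less[OF l e_pos] by simp
    have "(?X * dag ?J) $$ (l * e, j * e + k) = (\<Sum>m<n. ?X $$ (l * e, m * e) * cnj (?K $$ (j,m)))"
      using index_mult_dag_kraus_lift[OF ground_ext_carrier ij(2) k le] False by simp
    also have "\<dots> = (\<Sum>m<n. \<rho> $$ (l,m) * cnj (?K $$ (j,m)))"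
      using e_pos le by (intro sum.cong refl) (auto simp: index_ground_ext tensor_index_less[OF _ e_pos])
    finally show ?thesis .
  qed
  moreover have "(?J * (?X * dag ?J)) $$ (i * e + k, j * e + k) =
      (\<Sum>l<n. ?K $$ (i,l) * (?X * dag ?J) $$ (l * e, j * e + k))"
    using index_kraus_lift_mult[where Ks=Ks, OF _ ij(1) k tensor_index_less[OF ij(2) k], of "?X * dag ?J"]
      mult_carrier_mat[OF ground_ext_carrier dag_carrier[OF kraus_lift_carrier]] False by simp
  ultimately show ?thesis
    using False index_sandwich[OF K \<rho> ij] by simp
next
  case True
  then show ?thesis
    using index_kraus_lift_mult[where Ks=Ks, OF _ ij(1) k tensor_index_less[OF ij(2) k],
        of "ground_ext n e \<rho> * dag (kraus_lift n e Ks)"]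
      mult_carrier_mat[OF ground_ext_carrier dag_carrier[OF kraus_lift_carrier]] by simp
qed

lemma ptrace_kraus_lift_sandwich_ground_ext:
  assumes \<rho>: "\<rho> \<in> carrier_mat n n"
  shows "ptrace_E n e (kraus_lift n e Ks * (ground_ext n e \<rho> * dag (kraus_lift n e Ks))) =
    msum n n (map (\<lambda>K. K * \<rho> * dag K) Ks)"
proof -
  have sum_carrier: "msum n n (map (\<lambda>K. K * \<rho> * dag K) Ks) \<in> carrier_mat n n"
    using Ks \<rho> by (intro msum_map_carrier) auto
  have e_pos: "0 < e" and e_pred: "e - 1 = length Ks" using e by simp_all
  show ?thesis
  proof (rule eq_matI)
    fix i j assume "i < dim_row (msum n n (map (\<lambda>K. K * \<rho> * dag K) Ks))"
      "j < dim_col (msum n n (map (\<lambda>K. K * \<rho> * dag K) Ks))"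
    then have ij: "i < n" "j < n" using sum_carrier by auto
    have "ptrace_E n e (kraus_lift n e Ks * (ground_ext n e \<rho> * dag (kraus_lift n e Ks))) $$ (i,j) =
        (\<Sum>k<e. if k = 0 then 0 else (Ks ! (k - 1) * \<rho> * dag (Ks ! (k - 1))) $$ (i,j))"
      using ij by (simp add: ptrace_E_def index_kraus_lift_sandwich_ground_ext[OF \<rho>])
    also have "\<dots> = (\<Sum>k<length Ks. (Ks ! k * \<rho> * dag (Ks ! k)) $$ (i,j))"
      by (simp only: sum_lessThan_Suc_pred[OF e_pos] e_pred) simp
    also have "\<dots> = (\<Sum>K\<leftarrow>Ks. (K * \<rho> * dag K) $$ (i,j))"
      by (simp add: sum_list_sum_nth atLeast0LessThan)
    also have "\<dots> = msum n n (map (\<lambda>K. K * \<rho> * dag K) Ks) $$ (i,j)"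
      using Ks \<rho> ij by (intro index_msum_map[symmetric]) auto
    finally show "ptrace_E n e (kraus_lift n e Ks * (ground_ext n e \<rho> * dag (kraus_lift n e Ks))) $$ (i,j) =
        msum n n (map (\<lambda>K. K * \<rho> * dag K) Ks) $$ (i,j)" .
  qed (use sum_carrier in \<open>auto simp: ptrace_E_def\<close>)
qed

lemma dilation_unitary_mult_ground_ext:
  "(1\<^sub>m (n * e) - dilation_Q n e Ks) * ground_ext n e \<rho> = kraus_lift n e Ks * ground_ext n e \<rho>"
proof -
  let ?X = "ground_ext n e \<rho>" and ?W = "dilation_W n e Ks" and ?J = "kraus_lift n e Ks"
  have "dag ?W * ?X = ground_proj (n * e) e * ?X - dag ?J * ?X"
    unfolding dag_dilation_W by (rule minus_mult_distrib_mat) auto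
  also have "\<dots> = ?X"
    unfolding ground_proj_mult_ground_ext dag_kraus_lift_mult_ground_ext by (rule eq_matI) auto
  finally have WX: "dag ?W * ?X = ?X" .
  have "dilation_Q n e Ks * ?X = ?W * (dag ?W * ?X)"
    unfolding dilation_Q_def by (rule assoc_mult_mat) auto
  also have "\<dots> = ?W * ?X" by (simp only: WX)
  also have "\<dots> = ground_proj (n * e) e * ?X - ?J * ?X"
    unfolding dilation_W_def by (rule minus_mult_distrib_mat) auto
  finally have QX: "dilation_Q n e Ks * ?X = ?X - ?J * ?X"
    by (simp add: ground_proj_mult_ground_ext)
  have "(1\<^sub>m (n * e) - dilation_Q n e Ks) * ?X = ?X - dilation_Q n e Ks * ?X"
    by (subst minus_mult_distrib_mat[of _ "n * e" "n * e"]) auto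
  also have "\<dots> = ?J * ?X" unfolding QX by (rule eq_matI) auto
  finally show ?thesis .
qed

lemma dilation_unitary_sandwich_ground_ext:
  assumes \<rho>: "\<rho> \<in> carrier_mat n n" "dag \<rho> = \<rho>"
  shows "(1\<^sub>m (n * e) - dilation_Q n e Ks) * ground_ext n e \<rho> * dag (1\<^sub>m (n * e) - dilation_Q n e Ks) =
    kraus_lift n e Ks * (ground_ext n e \<rho> * dag (kraus_lift n e Ks))"
proof -
  let ?X = "ground_ext n e \<rho>" and ?U = "1\<^sub>m (n * e) - dilation_Q n e Ks" and ?J = "kraus_lift n e Ks"
  have e_pos: "0 < e" using e by simp
  have U: "?U \<in> carrier_mat (n * e) (n * e)" by auto
  have dag_U: "dag ?U = ?U" by (simp add: dag_minus[of _ "n * e" "n * e"] dag_dilation_Q)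
  have dag_X: "dag ?X = ?X" using dag_ground_ext[OF \<rho>(2,1) e_pos] .
  have "?X * ?U = dag (?U * ?X)"
    using U by (simp add: dag_mult[of _ "n * e" "n * e" _ "n * e"] dag_U dag_X)
  also have "\<dots> = ?X * dag ?J"
    by (simp add: dilation_unitary_mult_ground_ext dag_mult[of _ "n * e" "n * e" _ "n * e"] dag_X)
  finally have XU: "?X * ?U = ?X * dag ?J" .
  have "?U * ?X * dag ?U = (?J * ?X) * ?U" by (simp only: dag_U dilation_unitary_mult_ground_ext)
  also have "\<dots> = ?J * (?X * ?U)" by (rule assoc_mult_mat) (use U in auto)
  finally show ?thesis by (simp only: XU)
qed

lemma hamiltonian_dilation_kraus_rep:
  assumes K: "is_kraus_rep n n \<Phi> Ks" and T: "T \<noteq> 0"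
  shows "hamiltonian_dilation T n e (env_ground e) (dilation_hamiltonian n e Ks) T \<Phi>"
  unfolding hamiltonian_dilation_def Let_def
    mexp_dilation_hamiltonian[OF kraus_rep_completeness[OF K] T]
proof (intro allI impI)
  fix \<rho> assume \<rho>: "density n \<rho>"
  have carrier: "\<rho> \<in> carrier_mat n n" and herm: "dag \<rho> = \<rho>"
    using \<rho> unfolding density_def hermitian_def by auto
  have "0 < e" using e by simp
  then show "\<Phi> \<rho> = ptrace_E n e ((1\<^sub>m (n * e) - dilation_Q n e Ks) * kron \<rho> (ket_bra (env_ground e)) *
      dag (1\<^sub>m (n * e) - dilation_Q n e Ks))"
    by (simp add: kron_ket_bra_env_ground[OF carrier] dilation_unitary_sandwich_ground_ext[OF carrier herm]
        ptrace_kraus_lift_sandwich_ground_ext[OF carrier] kraus_rep_apply[OF K \<rho>])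
qed

end

section \<open>Dilations of superpositions\<close>

lemma tensor_index_less_sector: "0 < e \<Longrightarrow> ((p::nat) < a * e) = (p div e < a)"
  by (simp add: div_less_iff_less_mult)

lemma tensor_index_sector_div:
  assumes "a * e \<le> (p::nat)" "0 < e" shows "(p - a * e) div e = p div e - a"
proof -
  obtain p' where "p = a * e + p'" using assms(1) le_Suc_ex by blast
  then show ?thesis using assms(2) by simp
qed

lemma tensor_index_sector_mod:
  assumes "a * e \<le> (p::nat)" shows "(p - a * e) mod e = p mod e"
proof -
  obtain p' where "p = a * e + p'" using assms le_Suc_ex by blast
  then show ?thesis by simp
qed

lemma tensor_index_sector_shift:
  fixes p :: nat
  assumes "p < (a + b) * e" "\<not> p div e < a" "0 < e"
  shows "a * e \<le> p" "p - a * e < b * e"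
proof -
  show "a * e \<le> p" using assms(2,3) tensor_index_less_sector[of e p a] by simp
  then show "p - a * e < b * e" using assms(1) by (simp add: distrib_right)
qed

lemma index_dsum_tensor:
  assumes "M \<in> carrier_mat (a * e) (a * e)" "N \<in> carrier_mat (b * e) (b * e)"
    and "p < (a + b) * e" "q < (a + b) * e" "0 < e"
  shows "dsum M N $$ (p,q) =
    (if p div e < a then if q div e < a then M $$ (p,q) else 0
     else if q div e < a then 0 else N $$ (p - a * e, q - a * e))"
proof -
  have "p < a * e + b * e" "q < a * e + b * e" using assms(3,4) by (simp_all add: distrib_right)
  then show ?thesis
    using assms(1,2) index_dsum[OF assms(1,2)] tensor_index_less_sector[OF assms(5)] by simp
qed

lemma kron_dsum:
  assumes X: "X \<in> carrier_mat a a" and Y: "Y \<in> carrier_mat b b" and E: "E \<in> carrier_mat e e"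
    and e: "0 < e"
  shows "kron (dsum X Y) E = dsum (kron X E) (kron Y E)"
proof (rule eq_matI)
  have XE: "kron X E \<in> carrier_mat (a * e) (a * e)" and YE: "kron Y E \<in> carrier_mat (b * e) (b * e)"
    using X Y E unfolding kron_def by auto
  fix p q assume "p < dim_row (dsum (kron X E) (kron Y E))" "q < dim_col (dsum (kron X E) (kron Y E))"
  then have pq: "p < (a + b) * e" "q < (a + b) * e" using XE YE by (auto simp: distrib_right)
  then have div: "p div e < a + b" "q div e < a + b" by (auto intro: div_less_of_less_mult)
  have "kron (dsum X Y) E $$ (p,q) = dsum X Y $$ (p div e, q div e) * E $$ (p mod e, q mod e)"
    using pq X Y E unfolding kron_def by (auto simp: distrib_right)
  also have "\<dots> = dsum (kron X E) (kron Y E) $$ (p,q)"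
  proof -
    have "kron X E $$ (p,q) = X $$ (p div e, q div e) * E $$ (p mod e, q mod e)"
      if "p div e < a" "q div e < a"
      using that X E e unfolding kron_def by (auto simp: tensor_index_less_sector)
    moreover have "kron Y E $$ (p - a * e, q - a * e) =
        Y $$ (p div e - a, q div e - a) * E $$ (p mod e, q mod e)"
      if "\<not> p div e < a" "\<not> q div e < a"
    proof -
      have ae: "a * e \<le> p" "a * e \<le> q" using that e by (simp_all add: tensor_index_less_sector[symmetric])
      moreover have "p - a * e < b * e" "q - a * e < b * e" using pq ae by (simp_all add: distrib_right)
      ultimately show ?thesis
        using Y E e unfolding kron_def by (simp add: tensor_index_sector_div tensor_index_sector_mod)
    qed
    ultimately show ?thesis
      using div X Y by (simp add: index_dsum[OF X Y] index_dsum_tensor[OF XE YE pq e])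
  qed
  finally show "kron (dsum X Y) E $$ (p,q) = dsum (kron X E) (kron Y E) $$ (p,q)" .
qed (use X Y E in \<open>auto simp: kron_def distrib_right\<close>)

lemma ptrace_E_dsum:
  assumes M: "M \<in> carrier_mat (a * e) (a * e)" and N: "N \<in> carrier_mat (b * e) (b * e)"
  shows "ptrace_E (a + b) e (dsum M N) = dsum (ptrace_E a e M) (ptrace_E b e N)"
proof (rule eq_matI)
  fix i j assume "i < dim_row (dsum (ptrace_E a e M) (ptrace_E b e N))"
    "j < dim_col (dsum (ptrace_E a e M) (ptrace_E b e N))"
  then have ij: "i < a + b" "j < a + b" by (auto simp: ptrace_E_def)
  have shift: "i * e + k - a * e = (i - a) * e + k" if "a \<le> i" for i k
    using that by (simp add: diff_mult_distrib)
  have entry: "dsum M N $$ (i * e + k, j * e + k) =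
      (if i < a then if j < a then M $$ (i * e + k, j * e + k) else 0
       else if j < a then 0 else N $$ ((i - a) * e + k, (j - a) * e + k))" if k: "k < e" for k
    using index_dsum_tensor[OF M N tensor_index_less[OF ij(1) k] tensor_index_less[OF ij(2) k]] k
    by (simp add: shift)
  show "ptrace_E (a + b) e (dsum M N) $$ (i,j) = dsum (ptrace_E a e M) (ptrace_E b e N) $$ (i,j)"
    using ij by (simp add: ptrace_E_def entry index_dsum[of _ a a _ b b] cong: sum.cong_simp)
qed (auto simp: ptrace_E_def)

lemma pow_dsum:
  assumes "X \<in> carrier_mat n1 n1" "Y \<in> carrier_mat n2 n2"
  shows "(dsum X Y) ^\<^sub>m k = dsum (X ^\<^sub>m k) (Y ^\<^sub>m k)"
  by (induction k) (use assms in \<open>simp_all add: dsum_one dsum_mult[of _ n1 n1 _ n1 _ n2 n2 _ n2]\<close>)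

lemma mexp_carrier: "M \<in> carrier_mat N N \<Longrightarrow> mexp M \<in> carrier_mat N N"
  unfolding mexp_def by auto

lemma mexp_dsum:
  assumes X: "X \<in> carrier_mat n1 n1" and Y: "Y \<in> carrier_mat n2 n2"
  shows "mexp (dsum X Y) = dsum (mexp X) (mexp Y)"
proof (rule eq_matI)
  fix i j assume "i < dim_row (dsum (mexp X) (mexp Y))" "j < dim_col (dsum (mexp X) (mexp Y))"
  then have ij: "i < n1 + n2" "j < n1 + n2" using mexp_carrier[OF X] mexp_carrier[OF Y] by auto
  have pow: "X ^\<^sub>m k \<in> carrier_mat n1 n1" "Y ^\<^sub>m k \<in> carrier_mat n2 n2" for k using X Y by auto
  show "mexp (dsum X Y) $$ (i,j) = dsum (mexp X) (mexp Y) $$ (i,j)"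
    using ij X Y mexp_carrier[OF X] mexp_carrier[OF Y] unfolding mexp_def
    by (simp add: pow_dsum[OF X Y] index_dsum[OF pow(1) pow(2)] index_dsum[of _ n1 n1 _ n2 n2])
qed (use X Y in \<open>auto simp: mexp_def\<close>)

lemma ground_proj_dsum: "ground_proj ((a + b) * e) e = dsum (ground_proj (a * e) e) (ground_proj (b * e) e)"
  by (rule eq_matI)
     (auto simp: index_ground_proj index_dsum[of _ "a * e" "a * e" _ "b * e" "b * e"]
       tensor_index_sector_mod distrib_right)

context
  fixes As Bs :: "complex mat list" and a b e :: nat
  assumes len: "length As = length Bs" and e: "e = length As + 1"
    and As: "\<And>A. A \<in> set As \<Longrightarrow> A \<in> carrier_mat a a"
    and Bs: "\<And>B. B \<in> set Bs \<Longrightarrow> B \<in> carrier_mat b b"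
begin

lemma kraus_lift_map2_dsum:
  "kraus_lift (a + b) e (map2 dsum As Bs) = dsum (kraus_lift a e As) (kraus_lift b e Bs)"
proof (rule eq_matI)
  have e_pos: "0 < e" using e by simp
  fix p q assume "p < dim_row (dsum (kraus_lift a e As) (kraus_lift b e Bs))"
    "q < dim_col (dsum (kraus_lift a e As) (kraus_lift b e Bs))"
  then have pq: "p < (a + b) * e" "q < (a + b) * e" by (auto simp: distrib_right)
  then have div: "p div e < a + b" "q div e < a + b" by (auto intro: div_less_of_less_mult)
  have shifted: "a * e \<le> p" "a * e \<le> q" "p - a * e < b * e" "q - a * e < b * e"
    if "\<not> p div e < a" "\<not> q div e < a"
    using that pq e_pos tensor_index_sector_shift by blast+
  have RHS: "dsum (kraus_lift a e As) (kraus_lift b e Bs) $$ (p,q) =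
    (if p div e < a then if q div e < a then kraus_lift a e As $$ (p,q) else 0
     else if q div e < a then 0 else kraus_lift b e Bs $$ (p - a * e, q - a * e))"
    by (rule index_dsum_tensor[OF kraus_lift_carrier kraus_lift_carrier pq e_pos])
  show "kraus_lift (a + b) e (map2 dsum As Bs) $$ (p,q) = dsum (kraus_lift a e As) (kraus_lift b e Bs) $$ (p,q)"
  proof (cases "q mod e = 0 \<and> p mod e \<noteq> 0")
    case False
    then show ?thesis
      using pq shifted e_pos
      by (auto simp: RHS index_kraus_lift tensor_index_sector_mod tensor_index_less_sector)
  next
    case True
    define k where "k = p mod e - 1"
    have k: "k < length As" using True mod_less_divisor[OF e_pos, of p] e unfolding k_def by linarith
    have pk: "p mod e - 1 = k" by (simp add: k_def)
    have blocks: "As ! k \<in> carrier_mat a a" "Bs ! k \<in> carrier_mat b b" using As Bs k len by auto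
    have "kraus_lift (a + b) e (map2 dsum As Bs) $$ (p,q) = dsum (As ! k) (Bs ! k) $$ (p div e, q div e)"
      using True pq k len unfolding k_def by (simp add: index_kraus_lift)
    also have "\<dots> = dsum (kraus_lift a e As) (kraus_lift b e Bs) $$ (p,q)"
      using True div shifted e_pos unfolding RHS index_dsum[OF blocks div]
      by (auto simp: index_kraus_lift tensor_index_less_sector tensor_index_sector_mod
          tensor_index_sector_div pk simp del: One_nat_def)
    finally show ?thesis .
  qed
qed (auto simp: distrib_right)

lemma dilation_hamiltonian_map2_dsum:
  "dilation_hamiltonian (a + b) e (map2 dsum As Bs) = dsum (dilation_hamiltonian a e As) (dilation_hamiltonian b e Bs)"
proof -
  have W: "dilation_W (a + b) e (map2 dsum As Bs) = dsum (dilation_W a e As) (dilation_W b e Bs)"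
    unfolding dilation_W_def kraus_lift_map2_dsum ground_proj_dsum by (rule dsum_minus) auto
  have "dilation_Q (a + b) e (map2 dsum As Bs) = dsum (dilation_Q a e As) (dilation_Q b e Bs)"
    unfolding dilation_Q_def W dag_dsum by (rule dsum_mult) auto
  then show ?thesis unfolding dilation_hamiltonian_def by (simp add: dsum_smult)
qed

end

lemma kron_zero: "E \<in> carrier_mat e e \<Longrightarrow> kron (0\<^sub>m n n) E = 0\<^sub>m (n * e) (n * e)"
  by (rule eq_matI) (auto simp: kron_def div_less_of_less_mult)

lemma ptrace_E_zero: "ptrace_E n e (0\<^sub>m (n * e) (n * e)) = 0\<^sub>m n n"
  by (rule eq_matI) (auto simp: ptrace_E_def tensor_index_less)

lemma ptrace_E_sandwich_zero:
  "U \<in> carrier_mat (n * e) (n * e) \<Longrightarrow> E \<in> carrier_mat e e \<Longrightarrow>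
   ptrace_E n e (U * kron (0\<^sub>m n n) E * dag U) = 0\<^sub>m n n"
  by (simp add: kron_zero ptrace_E_zero)

lemma hamiltonian_dilation_apply:
  "hamiltonian_dilation hbar n e eta H T \<Phi> \<Longrightarrow> density n \<rho> \<Longrightarrow>
   \<Phi> \<rho> = ptrace_E n e (mexp ((- \<i> * of_real T / of_real hbar) \<cdot>\<^sub>m H) * kron \<rho> (ket_bra eta) *
     dag (mexp ((- \<i> * of_real T / of_real hbar) \<cdot>\<^sub>m H)))"
  unfolding hamiltonian_dilation_def Let_def by blast

lemma hamiltonian_dilation_acts_on_sectors:
  assumes e: "0 < e" and eta: "unit_vec e eta"
    and HA: "hermitian (a * e) HAE" and HB: "hermitian (b * e) HBE"
    and DA: "hamiltonian_dilation hbar a e eta HAE T CA"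
    and DB: "hamiltonian_dilation hbar b e eta HBE T CB"
    and DS: "hamiltonian_dilation hbar (a + b) e eta (dsum HAE HBE) T CS"
  shows "acts_on_sectors a b CS CA CB"
proof -
  define c where "c = (- \<i> * of_real T / of_real hbar :: complex)"
  define UA where "UA = mexp (c \<cdot>\<^sub>m HAE)"
  define UB where "UB = mexp (c \<cdot>\<^sub>m HBE)"
  have UA: "UA \<in> carrier_mat (a * e) (a * e)" and UB: "UB \<in> carrier_mat (b * e) (b * e)"
    using HA HB unfolding UA_def UB_def hermitian_def by (auto intro!: mexp_carrier)
  have US: "mexp (c \<cdot>\<^sub>m dsum HAE HBE) = dsum UA UB"
    using HA HB unfolding dsum_smult UA_def UB_def hermitian_def by (intro mexp_dsum) auto
  have E: "ket_bra eta \<in> carrier_mat e e" using eta unfolding unit_vec_def ket_bra_def by auto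
  have state: "kron \<rho> (ket_bra eta) \<in> carrier_mat (n * e) (n * e)" if "\<rho> \<in> carrier_mat n n" for \<rho> n
    using that E unfolding kron_def by auto
  note dA = hamiltonian_dilation_apply[OF DA, folded c_def UA_def]
    and dB = hamiltonian_dilation_apply[OF DB, folded c_def UB_def]
    and dS = hamiltonian_dilation_apply[OF DS, folded c_def, unfolded US]
  have sector: "CS (dsum \<rho> \<sigma>) = dsum (ptrace_E a e (UA * kron \<rho> (ket_bra eta) * dag UA))
      (ptrace_E b e (UB * kron \<sigma> (ket_bra eta) * dag UB))"
    if "density (a + b) (dsum \<rho> \<sigma>)" "\<rho> \<in> carrier_mat a a" "\<sigma> \<in> carrier_mat b b" for \<rho> \<sigma>
    using that UA UB state[of \<rho> a] state[of \<sigma> b]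
    by (simp add: dS kron_dsum[OF _ _ E e] sandwich_dsum[OF UA UB] ptrace_E_dsum)
  show ?thesis
    unfolding acts_on_sectors_def
  proof (intro conjI allI impI)
    fix \<rho> assume \<rho>: "density a \<rho>"
    show "CS (dsum \<rho> (0\<^sub>m b b)) = dsum (CA \<rho>) (0\<^sub>m b b)"
      using sector[OF density_dsum_zero[OF \<rho>] density_carrier[OF \<rho>]] dA[OF \<rho>]
      by (simp add: ptrace_E_sandwich_zero[OF UB E])
  next
    fix \<rho> assume \<rho>: "density b \<rho>"
    show "CS (dsum (0\<^sub>m a a) \<rho>) = dsum (0\<^sub>m a a) (CB \<rho>)"
      using sector[OF density_zero_dsum[OF \<rho>] _ density_carrier[OF \<rho>]] dB[OF \<rho>]
      by (simp add: ptrace_E_sandwich_zero[OF UA E])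
  qed
qed

lemma dsum_kraus_rep_hamiltonian_dilation:
  assumes len: "length As = length Bs" and KA: "is_kraus_rep a a CA As" and KB: "is_kraus_rep b b CB Bs"
    and KS: "is_kraus_rep (a + b) (a + b) CS (map2 dsum As Bs)" and hbar: "hbar \<noteq> 0"
  shows "\<exists>e eta HAE HBE T. e > 0 \<and> unit_vec e eta \<and>
    hermitian (a * e) HAE \<and> hermitian (b * e) HBE \<and>
    hamiltonian_dilation hbar a e eta HAE T CA \<and>
    hamiltonian_dilation hbar b e eta HBE T CB \<and>
    hamiltonian_dilation hbar (a + b) e eta (dsum HAE HBE) T CS"
proof -
  define e where "e = length As + 1"
  have As: "\<And>A. A \<in> set As \<Longrightarrow> A \<in> carrier_mat a a" using KA by (rule kraus_rep_carrier)
  have Bs: "\<And>B. B \<in> set Bs \<Longrightarrow> B \<in> carrier_mat b b" using KB by (rule kraus_rep_carrier)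
  have Ks: "\<And>K. K \<in> set (map2 dsum As Bs) \<Longrightarrow> K \<in> carrier_mat (a + b) (a + b)"
    using KS by (rule kraus_rep_carrier)
  have "hamiltonian_dilation hbar a e (env_ground e) (dilation_hamiltonian a e As) hbar CA"
    using hamiltonian_dilation_kraus_rep[OF e_def As KA hbar] .
  moreover have "hamiltonian_dilation hbar b e (env_ground e) (dilation_hamiltonian b e Bs) hbar CB"
    using hamiltonian_dilation_kraus_rep[OF _ Bs KB hbar] len by (simp add: e_def)
  moreover have "hamiltonian_dilation hbar (a + b) e (env_ground e)
      (dsum (dilation_hamiltonian a e As) (dilation_hamiltonian b e Bs)) hbar CS"
    using hamiltonian_dilation_kraus_rep[OF _ Ks KS hbar] len
    by (simp add: e_def dilation_hamiltonian_map2_dsum[OF len _ As Bs])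
  moreover have "0 < e" "unit_vec e (env_ground e)" using env_ground_unit by (simp_all add: e_def)
  moreover have "hermitian (a * e) (dilation_hamiltonian a e As)" "hermitian (b * e) (dilation_hamiltonian b e Bs)"
    by (rule hermitian_dilation_hamiltonian)+
  ultimately show ?thesis
    by (intro exI[of _ e] exI[of _ "env_ground e"] exI[of _ "dilation_hamiltonian a e As"]
        exI[of _ "dilation_hamiltonian b e Bs"] exI[of _ hbar]) simp
qed

theorem theorem1:
  fixes a b :: nat and hbar :: real
    and CA CB CS :: "complex mat \<Rightarrow> complex mat"
  assumes "a > 0" and "b > 0" and "hbar > 0"
    and "is_channel a a CA" and "is_channel b b CB" and "is_channel (a+b) (a+b) CS"
  shows "(superposition_of a b CS CA CB
           \<longleftrightarrow> (\<exists>As Bs. length As = length Bs \<and>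
                  is_kraus_rep a a CA As \<and> is_kraus_rep b b CB Bs \<and>
                  is_kraus_rep (a+b) (a+b) CS (map2 dsum As Bs)))
       \<and> (superposition_of a b CS CA CB
           \<longleftrightarrow> (\<exists>e eta HAE HBE T. e > 0 \<and> unit_vec e eta \<and>
                  hermitian (a*e) HAE \<and> hermitian (b*e) HBE \<and>
                  hamiltonian_dilation hbar a e eta HAE T CA \<and>
                  hamiltonian_dilation hbar b e eta HBE T CB \<and>
                  hamiltonian_dilation hbar (a+b) e eta (dsum HAE HBE) T CS))"
proof -
  note kraus_form = superposition_iff_dsum_kraus_rep[OF assms(4-6)]
  have hbar: "hbar \<noteq> 0" using assms(3) by simp
  have "superposition_of a b CS CA CB
      \<longleftrightarrow> (\<exists>e eta HAE HBE T. e > 0 \<and> unit_vec e eta \<and> hermitian (a*e) HAE \<and> hermitian (b*e) HBE \<and>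
        hamiltonian_dilation hbar a e eta HAE T CA \<and> hamiltonian_dilation hbar b e eta HBE T CB \<and>
        hamiltonian_dilation hbar (a+b) e eta (dsum HAE HBE) T CS)" (is "_ \<longleftrightarrow> ?dilation")
  proof
    assume "superposition_of a b CS CA CB"
    then obtain As Bs where "length As = length Bs" "is_kraus_rep a a CA As" "is_kraus_rep b b CB Bs"
      "is_kraus_rep (a + b) (a + b) CS (map2 dsum As Bs)"
      unfolding kraus_form by blast
    from dsum_kraus_rep_hamiltonian_dilation[OF this hbar] show ?dilation .
  next
    assume ?dilation
    then obtain e eta HAE HBE T where "e > 0" "unit_vec e eta" "hermitian (a*e) HAE" "hermitian (b*e) HBE"
      "hamiltonian_dilation hbar a e eta HAE T CA" "hamiltonian_dilation hbar b e eta HBE T CB"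
      "hamiltonian_dilation hbar (a+b) e eta (dsum HAE HBE) T CS"
      by blast
    from hamiltonian_dilation_acts_on_sectors[OF this]
    show "superposition_of a b CS CA CB" by (rule acts_on_sectors_imp_superposition[OF _ assms(4-6)])
  qed
  with kraus_form show ?thesis by blast
qed

end
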